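(* Let $L_0\in\mathbb{R}^{n\times n}$ have reduced SVD $L_0=U\Sigma V^*$, let $S_0\in\mathbb{R}^{n\times n}$ with support $\Omega$, and let $0<\lambda<1$. Assume $\|\mathcal{P}_\Omega\mathcal{P}_T\|\le 1/2$. Then $(L_0,S_0)$ is the unique solution of \[ \text{minimize } \|L\|_*+\lambda\|S\|_1\quad\text{subject to}\quad L+S=L_0+S_0 \] if there is a triple $(W,F,D)$ of $n\times n$ matrices obeying \[ UV^*+W=\lambda(\mathrm{sgn}(S_0)+F+\mathcal{P}_\Omega D) \] with $\mathcal{P}_TW=0$, $\|W\|\le\frac12$, $\mathcal{P}_\Omega F=0$, $\|F\|_\infty\le\frac12$, and $\|\mathcal{P}_\Omega D\|_F\le\frac14$.
   Context: $U,V\in\mathbb{R}^{n\times r}$ have orthonormal columns. $T=\{UX^*+YV^*: X,Y\in\mathbb{R}^{n\times r}\}$ and $\mathcal{P}_T$ is the orthogonal projection onto $T$ with respect to the trace inner product. $\mathcal{P}_\Omega X$ keeps the entries of $X$ in $\Omega$ and zeroes the others. For linear maps on matrices, $\|\cdot\|$ is the operator norm with respect to the Frobenius norm; for matrices, $\|W\|$ is the spectral norm, $\|\cdot\|_F$ the Frobenius norm, $\|F\|_\infty=\max_{ij}|F_{ij}|$, $\|\cdot\|_*$ the nuclear norm and $\|S\|_1=\sum_{ij}|S_{ij}|$. $\mathrm{sgn}$ is the entrywise sign with $\mathrm{sgn}(0)=0$. *)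

theory Defs
  imports "Jordan_Normal_Form.Matrix" "Jordan_Normal_Form.Char_Poly"
    "HOL-Computational_Algebra.Polynomial"
begin

definition tr_inner :: "real mat \<Rightarrow> real mat \<Rightarrow> real" where
  "tr_inner A B = (\<Sum>i<dim_row A. \<Sum>j<dim_col A. A $$ (i,j) * B $$ (i,j))"

definition singular_values :: "real mat \<Rightarrow> real multiset" where
  "singular_values A = image_mset sqrt (proots (char_poly (transpose_mat A * A)))"

definition nuclear_norm :: "real mat \<Rightarrow> real" where
  "nuclear_norm A = sum_mset (singular_values A)"

definition spectral_norm :: "real mat \<Rightarrow> real" where
  "spectral_norm A = Max (insert 0 (set_mset (singular_values A)))"

definition frob_norm :: "real mat \<Rightarrow> real" where
  "frob_norm A = sqrt (\<Sum>i<dim_row A. \<Sum>j<dim_col A. (A $$ (i,j))^2)"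

definition max_norm :: "real mat \<Rightarrow> real" where
  "max_norm A = Max (insert 0 {\<bar>A $$ (i,j)\<bar> | i j. i < dim_row A \<and> j < dim_col A})"

definition l1_norm :: "real mat \<Rightarrow> real" where
  "l1_norm A = (\<Sum>i<dim_row A. \<Sum>j<dim_col A. \<bar>A $$ (i,j)\<bar>)"

definition sgn_mat :: "real mat \<Rightarrow> real mat" where
  "sgn_mat A = map_mat sgn A"

definition support :: "real mat \<Rightarrow> (nat \<times> nat) set" where
  "support A = {(i,j). i < dim_row A \<and> j < dim_col A \<and> A $$ (i,j) \<noteq> 0}"

definition P_Omega :: "(nat \<times> nat) set \<Rightarrow> real mat \<Rightarrow> real mat" where
  "P_Omega \<Omega> X = mat (dim_row X) (dim_col X) (\<lambda>(i,j). if (i,j) \<in> \<Omega> then X $$ (i,j) else 0)"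

definition tangent_space :: "nat \<Rightarrow> real mat \<Rightarrow> real mat \<Rightarrow> real mat set" where
  "tangent_space n U V = {U * transpose_mat X + Y * transpose_mat V | X Y.
      X \<in> carrier_mat n (dim_col U) \<and> Y \<in> carrier_mat n (dim_col V)}"

definition orth_proj :: "real mat set \<Rightarrow> real mat \<Rightarrow> real mat" where
  "orth_proj S M = (THE P. P \<in> S \<and> (\<forall>Y\<in>S. tr_inner (M - P) Y = 0))"

definition op_norm :: "nat \<Rightarrow> (real mat \<Rightarrow> real mat) \<Rightarrow> real" where
  "op_norm n f = Sup {frob_norm (f X) | X. X \<in> carrier_mat n n \<and> frob_norm X \<le> 1}"

definition is_opt :: "nat \<Rightarrow> real \<Rightarrow> real mat \<Rightarrow> real mat \<Rightarrow> real mat \<Rightarrow> bool" where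
  "is_opt n lam M L S \<longleftrightarrow> L \<in> carrier_mat n n \<and> S \<in> carrier_mat n n \<and> L + S = M \<and>
     (\<forall>L' S'. L' \<in> carrier_mat n n \<and> S' \<in> carrier_mat n n \<and> L' + S' = M \<longrightarrow>
        nuclear_norm L + lam * l1_norm S \<le> nuclear_norm L' + lam * l1_norm S')"

end

theory Submission
  imports Defs "Jordan_Normal_Form.Schur_Decomposition" "HOL-Analysis.L2_Norm"
begin

text \<open>Write a feasible pair as \<open>(L0 + H, S0 - H)\<close>. The subgradient inequality of the nuclear
  norm at \<open>L0\<close> (whose polar factor is \<open>U V\<^sup>T\<close>) and of the \<open>\<ell>\<^sub>1\<close> norm at \<open>S0\<close>, combined
  with the certificate, bound the increase of the objective from below by
  \<open>(1 - \<lambda>)/2 \<parallel>P\<^sub>T\<^sub>\<perp> H\<parallel>\<^sub>* + \<lambda>/4 \<parallel>P\<^sub>\<Omega>\<^sub>\<perp> H\<parallel>\<^sub>1\<close>; the error term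
  \<open>\<lambda>/4 \<parallel>P\<^sub>\<Omega> H\<parallel>\<^sub>F\<close> coming from \<open>D\<close> is absorbed using \<open>\<parallel>P\<^sub>\<Omega> P\<^sub>T\<parallel> \<le> 1/2\<close>.
  If the increase vanishes, then \<open>H = P\<^sub>\<Omega> P\<^sub>T H\<close>, so \<open>\<parallel>H\<parallel>\<^sub>F \<le> \<parallel>H\<parallel>\<^sub>F / 2\<close> and \<open>H = 0\<close>.
  Nuclear and spectral norms are computed from an orthonormal eigenbasis of \<open>A\<^sup>T A\<close>, which
  the spectral theorem for real symmetric matrices provides.\<close>

text \<open>Keep \<open>col (A * B) j\<close> in the form \<open>A *\<^sub>v col B j\<close> (rule \<open>col_mult2\<close>).\<close>

declare col_mult[simp del]

section \<open>Orthogonal diagonalisation of real symmetric matrices\<close>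

lemma conjugate_real_vec [simp]: "conjugate (v :: real vec) = v"
  by (rule eq_vecI) auto

lemma scalar_prod_self_nonneg: "(v :: real vec) \<bullet> v \<ge> 0"
  unfolding scalar_prod_def by (auto intro: sum_nonneg)

lemma scalar_prod_self_pos:
  assumes "v \<in> carrier_vec n" "v \<noteq> 0\<^sub>v n"
  shows "(v :: real vec) \<bullet> v > 0"
  using conjugate_square_eq_0_vec[OF assms(1)] assms(2) scalar_prod_self_nonneg[of v]
  by (simp add: order_less_le)

text \<open>An eigenvector of the complexification has real eigenvalue, because the Hermitian form
  \<open>z\<^sup>* S z\<close> is real; its real or its imaginary part is then a real eigenvector.\<close>

lemma real_symmetric_eigenvector:
  fixes S :: "real mat"
  assumes S: "S \<in> carrier_mat n n" and sym: "transpose_mat S = S" and n: "n > 0"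
  shows "\<exists>\<mu> v. v \<in> carrier_vec n \<and> v \<noteq> 0\<^sub>v n \<and> S *\<^sub>v v = \<mu> \<cdot>\<^sub>v v"
proof -
  define Sc where "Sc = map_mat complex_of_real S"
  have Sc: "Sc \<in> carrier_mat n n" using S unfolding Sc_def by auto
  obtain as where cp: "char_poly Sc = (\<Prod>a\<leftarrow>as. [:- a, 1:])" and len: "length as = n"
    using char_poly_factorized[OF Sc] by blast
  obtain l rest where asl: "as = l # rest" using len n by (cases as) auto
  have "poly (char_poly Sc) l = 0" unfolding cp asl by simp
  hence "eigenvalue Sc l" using eigenvalue_root_char_poly[OF Sc] by simp
  then obtain z where z: "z \<in> carrier_vec n" "z \<noteq> 0\<^sub>v n" "Sc *\<^sub>v z = l \<cdot>\<^sub>v z"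
    unfolding eigenvalue_def eigenvector_def using Sc by auto
  have Sij: "\<And>i j. i < n \<Longrightarrow> j < n \<Longrightarrow> S $$ (j,i) = S $$ (i,j)"
    using sym S by (metis carrier_matD index_transpose_mat(1))
  have comp: "(\<Sum>j<n. complex_of_real (S $$ (i,j)) * z $ j) = l * z $ i" if i: "i < n" for i
  proof -
    have "(Sc *\<^sub>v z) $ i = l * z $ i" using z(3) i z(1) by auto
    moreover have "(Sc *\<^sub>v z) $ i = (\<Sum>j<n. complex_of_real (S $$ (i,j)) * z $ j)"
      using i Sc S z(1) unfolding Sc_def
      by (auto simp: scalar_prod_def lessThan_atLeast0 intro!: sum.cong)
    ultimately show ?thesis by simp
  qed
  define Q where "Q = (\<Sum>i<n. cnj (z $ i) * (\<Sum>j<n. complex_of_real (S $$ (i,j)) * z $ j))"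
  define N where "N = (\<Sum>i<n. cmod (z $ i) ^ 2)"
  have QN: "Q = l * complex_of_real N"
  proof -
    have "Q = (\<Sum>i<n. l * (cnj (z $ i) * z $ i))" unfolding Q_def
      by (rule sum.cong, auto simp: comp)
    also have "\<dots> = l * (\<Sum>i<n. complex_of_real (cmod (z $ i) ^ 2))"
      by (simp add: sum_distrib_left, intro sum.cong refl,
          simp add: mult.commute flip: complex_norm_square of_real_power)
    finally show ?thesis unfolding N_def by simp
  qed
  have "cnj Q = Q"
  proof -
    have "cnj Q = (\<Sum>i<n. \<Sum>j<n. z $ i * (complex_of_real (S $$ (i,j)) * cnj (z $ j)))"
      unfolding Q_def by (simp add: sum_distrib_left)
    also have "\<dots> = (\<Sum>j<n. \<Sum>i<n. z $ i * (complex_of_real (S $$ (i,j)) * cnj (z $ j)))"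
      by (rule sum.swap)
    also have "\<dots> = Q" unfolding Q_def sum_distrib_left
      by (intro sum.cong refl, auto simp: Sij mult.commute mult.left_commute)
    finally show ?thesis .
  qed
  hence ImQ: "Im Q = 0" by (metis Reals_cnj_iff complex_is_Real_iff)
  obtain k where k: "k < n" "z $ k \<noteq> 0"
    using z(1,2) by (metis carrier_vecD eq_vecI index_zero_vec(1,2))
  have "N > 0" unfolding N_def
  proof (rule sum_pos2[of _ k])
    show "cmod (z $ k)^2 > 0" using k by simp
  qed (use k in auto)
  with ImQ QN have Iml: "Im l = 0" by simp
  have compR: "S *\<^sub>v vec n (\<lambda>i. f (z $ i)) = Re l \<cdot>\<^sub>v vec n (\<lambda>i. f (z $ i))"
    if f: "f = Re \<or> f = Im" for f
  proof (rule eq_vecI)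
    fix i assume "i < dim_vec (Re l \<cdot>\<^sub>v vec n (\<lambda>i. f (z $ i)))"
    hence i: "i < n" by simp
    have "(S *\<^sub>v vec n (\<lambda>i. f (z $ i))) $ i = (\<Sum>j<n. S $$ (i,j) * f (z $ j))"
      using i S by (auto simp: scalar_prod_def lessThan_atLeast0 intro!: sum.cong)
    also have "\<dots> = f (\<Sum>j<n. complex_of_real (S $$ (i,j)) * z $ j)"
      using f by (auto simp: Re_sum Im_sum)
    also have "\<dots> = f (l * z $ i)" using comp[OF i] by simp
    also have "\<dots> = Re l * f (z $ i)" using f Iml by auto
    finally show "(S *\<^sub>v vec n (\<lambda>i. f (z $ i))) $ i = (Re l \<cdot>\<^sub>v vec n (\<lambda>i. f (z $ i))) $ i"
      using i by simp
  qed (use S in auto)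
  show ?thesis
  proof (cases "Re (z $ k) = 0")
    case True
    hence "Im (z $ k) \<noteq> 0" using k complex_eqI by force
    hence "vec n (\<lambda>i. Im (z $ i)) \<noteq> 0\<^sub>v n" using k
      by (metis index_vec index_zero_vec(1))
    thus ?thesis using compR[of Im]
      by (intro exI[of _ "Re l"] exI[of _ "vec n (\<lambda>i. Im (z $ i))"]) auto
  next
    case False
    hence "vec n (\<lambda>i. Re (z $ i)) \<noteq> 0\<^sub>v n" using k
      by (metis index_vec index_zero_vec(1))
    thus ?thesis using compR[of Re]
      by (intro exI[of _ "Re l"] exI[of _ "vec n (\<lambda>i. Re (z $ i))"]) auto
  qed
qed

lemma orthogonal_mat_with_first_col:
  fixes v :: "real vec"
  assumes v: "v \<in> carrier_vec n" and v1: "v \<bullet> v = 1"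
  shows "\<exists>W \<in> carrier_mat n n. transpose_mat W * W = 1\<^sub>m n \<and> col W 0 = v"
proof -
  have v0: "v \<noteq> 0\<^sub>v n" using v1 v by auto
  have n: "n > 0"
  proof (rule ccontr)
    assume "\<not> n > 0"
    hence "v \<bullet> v = 0" using v unfolding scalar_prod_def by simp
    thus False using v1 by simp
  qed
  interpret cof_vec_space n "TYPE(real)" .
  define b where "b = basis_completion v"
  define ws where "ws = gram_schmidt n b"
  from basis_completion[OF v v0, folded b_def]
  have dist_b: "distinct b" and indep: "\<not> lin_dep (set b)" and bc: "set b \<subseteq> carrier_vec n"
    and hdb: "hd b = v" and len_b: "length b = n" by auto
  from hdb len_b n obtain vs where bv: "b = v # vs" by (cases b, auto)
  from gram_schmidt_result[OF bc dist_b indep refl, folded ws_def]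
  have ws: "set ws \<subseteq> carrier_vec n" "corthogonal ws" "length ws = n"
    by (auto simp: len_b)
  from gram_schmidt_hd[OF v, of vs, folded bv] have hdws: "hd ws = v" unfolding ws_def .
  have ws0: "ws ! 0 = v" using hdws ws(3) n by (metis hd_conv_nth list.size(3) less_not_refl)
  have wsi: "ws ! i \<in> carrier_vec n" if "i < n" for i using ws that by auto
  have orth: "ws ! i \<bullet> ws ! j = 0 \<longleftrightarrow> i \<noteq> j" if "i < n" "j < n" for i j
    using ws(2) that ws(3) unfolding corthogonal_def by auto
  have pos: "ws ! i \<bullet> ws ! i > 0" if "i < n" for i
    using orth[OF that that] scalar_prod_self_nonneg[of "ws ! i"] by linarith
  define us where "us = map (\<lambda>w. (1 / sqrt (w \<bullet> w)) \<cdot>\<^sub>v w) ws"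
  have usi: "us ! i = (1 / sqrt (ws ! i \<bullet> ws ! i)) \<cdot>\<^sub>v ws ! i" if "i < n" for i
    unfolding us_def using that ws(3) by auto
  have usc: "set us \<subseteq> carrier_vec n" unfolding us_def using ws(1) by auto
  have lus: "length us = n" unfolding us_def using ws(3) by simp
  define W where "W = mat_of_cols n us"
  have W: "W \<in> carrier_mat n n" unfolding W_def using lus by auto
  have colW: "col W i = us ! i" if "i < n" for i
    unfolding W_def using that lus usc by (metis col_mat_of_cols nth_mem subsetD)
  have "transpose_mat W * W = 1\<^sub>m n"
  proof (rule eq_matI)
    fix i j assume "i < dim_row (1\<^sub>m n)" "j < dim_col (1\<^sub>m n)"
    hence i: "i < n" and j: "j < n" by auto
    have "(transpose_mat W * W) $$ (i,j) = us ! i \<bullet> us ! j"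
      using W i j colW by (simp add: row_transpose)
    also have "\<dots> = (1 / sqrt (ws ! i \<bullet> ws ! i)) * (1 / sqrt (ws ! j \<bullet> ws ! j)) * (ws ! i \<bullet> ws ! j)"
      unfolding usi[OF i] usi[OF j] using wsi[OF i] wsi[OF j]
      by (simp add: smult_scalar_prod_distrib scalar_prod_smult_distrib)
    also have "\<dots> = 1\<^sub>m n $$ (i,j)"
      using pos[OF i] orth[OF i j] i j by (cases "i = j") (auto simp: field_simps)
    finally show "(transpose_mat W * W) $$ (i,j) = 1\<^sub>m n $$ (i,j)" .
  qed (use W in auto)
  moreover have "col W 0 = v" using colW[OF n] usi[OF n] ws0 v1 by simp
  ultimately show ?thesis using W by blast
qed

text \<open>Induction on the dimension: an orthogonal matrix with a unit eigenvector as first column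
  splits \<open>S\<close> as a \<open>1 + m\<close> block diagonal matrix.\<close>

lemma real_symmetric_orthogonal_diagonalization:
  fixes S :: "real mat"
  assumes "S \<in> carrier_mat n n" "transpose_mat S = S"
  shows "\<exists>Q D. Q \<in> carrier_mat n n \<and> D \<in> carrier_mat n n \<and> diagonal_mat D \<and>
     transpose_mat Q * Q = 1\<^sub>m n \<and> S = Q * D * transpose_mat Q"
  using assms
proof (induction n arbitrary: S)
  case 0
  show ?case
    by (rule exI[of _ "1\<^sub>m 0"], rule exI[of _ "0\<^sub>m 0 0"], insert 0(1),
        auto simp: diagonal_mat_def intro!: eq_matI)
next
  case (Suc m S)
  let ?n = "Suc m"
  have S: "S \<in> carrier_mat ?n ?n" and symS: "transpose_mat S = S" using Suc.prems by auto
  obtain \<mu> v where v: "v \<in> carrier_vec ?n" "v \<noteq> 0\<^sub>v ?n" "S *\<^sub>v v = \<mu> \<cdot>\<^sub>v v"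
    using real_symmetric_eigenvector[OF S symS] by auto
  have vv: "v \<bullet> v > 0" by (rule scalar_prod_self_pos[OF v(1,2)])
  define u where "u = (1 / sqrt (v \<bullet> v)) \<cdot>\<^sub>v v"
  have u: "u \<in> carrier_vec ?n" unfolding u_def using v by simp
  have u1: "u \<bullet> u = 1" unfolding u_def using v(1) vv
    by (simp add: smult_scalar_prod_distrib scalar_prod_smult_distrib field_simps)
  have Su: "S *\<^sub>v u = \<mu> \<cdot>\<^sub>v u" unfolding u_def using v S
    by (simp add: mult_mat_vec smult_smult_assoc mult.commute)
  obtain W where W: "W \<in> carrier_mat ?n ?n" and WW: "transpose_mat W * W = 1\<^sub>m ?n"
    and W0: "col W 0 = u" using orthogonal_mat_with_first_col[OF u u1] by blast
  have WW': "W * transpose_mat W = 1\<^sub>m ?n"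
    using mat_mult_left_right_inverse[OF _ W WW] W by auto
  define M where "M = transpose_mat W * S * W"
  have M: "M \<in> carrier_mat ?n ?n" unfolding M_def using W S by auto
  have symM: "transpose_mat M = M" unfolding M_def using W S symS
    by (simp add: transpose_mult[of _ ?n ?n _ ?n] assoc_mult_mat[of _ ?n ?n _ ?n _ ?n])
  have Mi0: "M $$ (i, 0) = (if i = 0 then \<mu> else 0)" if i: "i < ?n" for i
  proof -
    have "M $$ (i,0) = (transpose_mat W * (S * W)) $$ (i,0)"
      unfolding M_def using W S by (simp add: assoc_mult_mat[of _ ?n ?n _ ?n _ ?n])
    also have "\<dots> = col W i \<bullet> col (S * W) 0" using i W S by (simp add: row_transpose)
    also have "col (S * W) 0 = S *\<^sub>v col W 0" using W S by simp
    also have "\<dots> = \<mu> \<cdot>\<^sub>v col W 0" using W0 Su by simp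
    also have "col W i \<bullet> (\<mu> \<cdot>\<^sub>v col W 0) = \<mu> * (col W i \<bullet> col W 0)"
      using W by (simp add: scalar_prod_smult_distrib)
    also have "col W i \<bullet> col W 0 = (transpose_mat W * W) $$ (i,0)"
      using i W by (simp add: row_transpose)
    also have "\<dots> = (if i = 0 then 1 else 0)" using WW i by simp
    finally show ?thesis by simp
  qed
  have Msym: "M $$ (i,j) = M $$ (j,i)" if "i < ?n" "j < ?n" for i j
    using symM that M by (metis carrier_matD index_transpose_mat(1))
  obtain A1 A2 A0 A3 where sp: "split_block M 1 1 = (A1,A2,A0,A3)"
    by (cases "split_block M 1 1") auto
  have dims: "dim_row M = 1 + m" "dim_col M = 1 + m" using M by auto
  note spl = split_block[OF sp dims]
  have A1: "A1 = mat 1 1 (\<lambda>_. \<mu>)" using sp Mi0[of 0] unfolding split_block_def Let_def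
    by (auto intro!: eq_matI)
  have M0j: "M $$ (0, Suc j) = 0" if "j < m" for j
    using Mi0[of "Suc j"] Msym[of 0 "Suc j"] that by simp
  have A2: "A2 = 0\<^sub>m 1 m" using sp M0j M unfolding split_block_def Let_def
    by (auto intro!: eq_matI)
  have A0: "A0 = 0\<^sub>m m 1" using sp Mi0 M unfolding split_block_def Let_def
    by (auto intro!: eq_matI)
  have A3: "A3 \<in> carrier_mat m m" using spl by simp
  have symA3: "transpose_mat A3 = A3" using sp M unfolding split_block_def Let_def
    by (auto intro!: eq_matI Msym)
  obtain Q3 D3 where Q3: "Q3 \<in> carrier_mat m m" and D3: "D3 \<in> carrier_mat m m"
    and diag3: "diagonal_mat D3" and QQ3: "transpose_mat Q3 * Q3 = 1\<^sub>m m"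
    and A3eq: "A3 = Q3 * D3 * transpose_mat Q3"
    using Suc.IH[OF A3 symA3] by blast
  define P where "P = four_block_mat (1\<^sub>m 1) (0\<^sub>m 1 m) (0\<^sub>m m 1) Q3"
  define D where "D = four_block_mat A1 (0\<^sub>m 1 m) (0\<^sub>m m 1) D3"
  have A1c: "A1 \<in> carrier_mat 1 1" unfolding A1 by simp
  have P: "P \<in> carrier_mat ?n ?n" unfolding P_def using Q3 by auto
  have D: "D \<in> carrier_mat ?n ?n" unfolding D_def using D3 A1c by auto
  have PT: "transpose_mat P = four_block_mat (1\<^sub>m 1) (0\<^sub>m 1 m) (0\<^sub>m m 1) (transpose_mat Q3)"
    unfolding P_def using Q3 by (subst transpose_four_block_mat) auto
  have PTc: "transpose_mat P \<in> carrier_mat ?n ?n" using P by simp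
  have PD: "P * D = four_block_mat A1 (0\<^sub>m 1 m) (0\<^sub>m m 1) (Q3 * D3)"
    unfolding P_def D_def
    by (subst mult_four_block_mat[OF one_carrier_mat zero_carrier_mat zero_carrier_mat Q3
          A1c zero_carrier_mat zero_carrier_mat D3]) (use Q3 D3 A1c in auto)
  have QT3: "transpose_mat Q3 \<in> carrier_mat m m" using Q3 by simp
  have "P * D * transpose_mat P
      = four_block_mat A1 (0\<^sub>m 1 m) (0\<^sub>m m 1) (Q3 * D3 * transpose_mat Q3)"
    unfolding PD PT
    by (subst mult_four_block_mat[OF A1c zero_carrier_mat zero_carrier_mat mult_carrier_mat[OF Q3 D3]
          one_carrier_mat zero_carrier_mat zero_carrier_mat QT3]) (use Q3 D3 A1c in auto)
  also have "\<dots> = M" using spl(5) A2 A0 A3eq by simp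
  finally have MPD: "M = P * D * transpose_mat P" by simp
  have "S = W * M * transpose_mat W"
  proof -
    have "W * M * transpose_mat W = (W * transpose_mat W) * S * (W * transpose_mat W)"
      unfolding M_def using W S
      by (simp add: assoc_mult_mat[of _ ?n ?n _ ?n _ ?n])
    thus ?thesis using WW' S by simp
  qed
  also have "\<dots> = (W * P) * D * transpose_mat (W * P)"
    unfolding MPD using W P D PTc
    by (simp add: transpose_mult[of _ ?n ?n _ ?n] assoc_mult_mat[of _ ?n ?n _ ?n _ ?n])
  finally have Seq: "S = (W * P) * D * transpose_mat (W * P)" .
  have WWP: "transpose_mat W * (W * P) = P"
    by (subst assoc_mult_mat[symmetric, of _ ?n ?n _ ?n _ ?n]) (use W P WW in auto)
  have "transpose_mat (W * P) * (W * P) = transpose_mat P * P"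
    using W P WWP by (simp add: transpose_mult[of _ ?n ?n _ ?n] assoc_mult_mat[of _ ?n ?n _ ?n _ ?n])
  also have "\<dots> = 1\<^sub>m ?n" unfolding PT unfolding P_def using Q3 QQ3
    by (subst mult_four_block_mat[OF one_carrier_mat zero_carrier_mat zero_carrier_mat QT3
          one_carrier_mat zero_carrier_mat zero_carrier_mat Q3])
       (use Q3 in \<open>auto simp: four_block_one_mat[of 1 m, simplified]\<close>)
  finally have QQ: "transpose_mat (W * P) * (W * P) = 1\<^sub>m ?n" .
  have diagD: "diagonal_mat D"
    using diag3 D3 A1c unfolding D_def diagonal_mat_def by (auto simp: index_mat_four_block)
  show ?case using W P D diagD QQ Seq by (intro exI[of _ "W * P"] exI[of _ D]) auto
qed

section \<open>The trace inner product and the Frobenius norm\<close>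

lemma tr_inner_carrier:
  "X \<in> carrier_mat p q \<Longrightarrow> tr_inner X Y = (\<Sum>i<p. \<Sum>j<q. X $$ (i,j) * Y $$ (i,j))"
  unfolding tr_inner_def by simp

lemma tr_inner_cols:
  assumes X: "X \<in> carrier_mat p q" and Y: "Y \<in> carrier_mat p q"
  shows "tr_inner X Y = (\<Sum>j<q. col X j \<bullet> col Y j)"
proof -
  have "tr_inner X Y = (\<Sum>j<q. \<Sum>i<p. X $$ (i,j) * Y $$ (i,j))"
    unfolding tr_inner_carrier[OF X] by (rule sum.swap)
  also have "\<dots> = (\<Sum>j<q. col X j \<bullet> col Y j)"
    using X Y by (intro sum.cong refl)
      (auto simp: scalar_prod_def lessThan_atLeast0 intro!: sum.cong)
  finally show ?thesis .
qed

lemma tr_inner_commute: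
  "X \<in> carrier_mat p q \<Longrightarrow> Y \<in> carrier_mat p q \<Longrightarrow> tr_inner X Y = tr_inner Y X"
  unfolding tr_inner_def by (auto simp: mult.commute)

lemma tr_inner_add_left:
  "X \<in> carrier_mat p q \<Longrightarrow> Y \<in> carrier_mat p q \<Longrightarrow>
   tr_inner (X + Y) Z = tr_inner X Z + tr_inner Y Z"
  unfolding tr_inner_def by (auto simp: distrib_right sum.distrib)

lemma tr_inner_add_right:
  "X \<in> carrier_mat p q \<Longrightarrow> Y \<in> carrier_mat p q \<Longrightarrow> Z \<in> carrier_mat p q \<Longrightarrow>
   tr_inner X (Y + Z) = tr_inner X Y + tr_inner X Z"
  unfolding tr_inner_def by (auto simp: distrib_left sum.distrib)

lemma tr_inner_minus_left:
  "X \<in> carrier_mat p q \<Longrightarrow> Y \<in> carrier_mat p q \<Longrightarrow>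
   tr_inner (X - Y) Z = tr_inner X Z - tr_inner Y Z"
  unfolding tr_inner_def by (auto simp: left_diff_distrib sum_subtractf)

lemma tr_inner_smult_left: "tr_inner (c \<cdot>\<^sub>m X) Z = c * tr_inner X Z"
  unfolding tr_inner_def by (auto simp: sum_distrib_left mult.assoc)

lemma tr_inner_zero_right: "tr_inner X (0\<^sub>m (dim_row X) (dim_col X)) = 0"
  unfolding tr_inner_def by simp

lemma tr_inner_mult_right:
  assumes X: "X \<in> carrier_mat p k" and Z: "Z \<in> carrier_mat k q" and Y: "Y \<in> carrier_mat p q"
  shows "tr_inner (X * Z) Y = tr_inner X (Y * transpose_mat Z)"
proof -
  have "tr_inner (X * Z) Y = (\<Sum>i<p. \<Sum>j<q. \<Sum>l<k. X $$ (i,l) * Z $$ (l,j) * Y $$ (i,j))"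
    using X Z by (auto simp: tr_inner_def scalar_prod_def lessThan_atLeast0 sum_distrib_right
        intro!: sum.cong)
  also have "\<dots> = (\<Sum>i<p. \<Sum>l<k. \<Sum>j<q. X $$ (i,l) * Z $$ (l,j) * Y $$ (i,j))"
    by (rule sum.cong[OF refl], rule sum.swap)
  also have "\<dots> = tr_inner X (Y * transpose_mat Z)"
    using X Z Y by (auto simp: tr_inner_def scalar_prod_def lessThan_atLeast0 sum_distrib_left
        mult_ac intro!: sum.cong)
  finally show ?thesis .
qed

lemma tr_inner_mult_left:
  assumes Z: "Z \<in> carrier_mat p k" and X: "X \<in> carrier_mat k q" and Y: "Y \<in> carrier_mat p q"
  shows "tr_inner (Z * X) Y = tr_inner X (transpose_mat Z * Y)"
proof -
  have "tr_inner (Z * X) Y = (\<Sum>i<p. \<Sum>j<q. \<Sum>l<k. Z $$ (i,l) * X $$ (l,j) * Y $$ (i,j))"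
    using X Z by (auto simp: tr_inner_def scalar_prod_def lessThan_atLeast0 sum_distrib_right
        intro!: sum.cong)
  also have "\<dots> = (\<Sum>l<k. \<Sum>j<q. \<Sum>i<p. Z $$ (i,l) * X $$ (l,j) * Y $$ (i,j))"
    by (subst sum.swap, subst (2) sum.swap, rule sum.cong[OF refl], rule sum.swap)
  also have "\<dots> = tr_inner X (transpose_mat Z * Y)"
    using X Z Y by (auto simp: tr_inner_def scalar_prod_def lessThan_atLeast0 sum_distrib_left
        mult_ac intro!: sum.cong)
  finally show ?thesis .
qed

lemma tr_inner_self_nonneg: "tr_inner X X \<ge> 0"
  unfolding tr_inner_def by (auto intro!: sum_nonneg)

lemma tr_inner_self_eq_0:
  assumes X: "X \<in> carrier_mat p q" and z: "tr_inner X X = 0"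
  shows "X = 0\<^sub>m p q"
proof (rule eq_matI)
  fix i j assume "i < dim_row (0\<^sub>m p q)" "j < dim_col (0\<^sub>m p q)"
  hence i: "i < p" and j: "j < q" by auto
  have "(\<Sum>i<p. \<Sum>j<q. X $$ (i,j) * X $$ (i,j)) = 0" using z tr_inner_carrier[OF X] by simp
  hence "\<forall>i\<in>{..<p}. (\<Sum>j<q. X $$ (i,j) * X $$ (i,j)) = 0"
    by (subst (asm) sum_nonneg_eq_0_iff) (auto intro!: sum_nonneg)
  hence "\<forall>j\<in>{..<q}. X $$ (i,j) * X $$ (i,j) = 0"
    using i by (subst (asm) sum_nonneg_eq_0_iff) auto
  thus "X $$ (i,j) = 0\<^sub>m p q $$ (i,j)" using i j by auto
qed (use X in auto)

lemma frob_norm_tr_inner: "frob_norm X = sqrt (tr_inner X X)"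
  unfolding frob_norm_def tr_inner_def by (simp add: power2_eq_square)

lemma frob_norm_nonneg: "frob_norm X \<ge> 0"
  unfolding frob_norm_def by (simp add: sum_nonneg)

lemma frob_norm_L2_set:
  "X \<in> carrier_mat p q \<Longrightarrow> frob_norm X = L2_set (\<lambda>(i,j). X $$ (i,j)) ({..<p} \<times> {..<q})"
  unfolding frob_norm_def L2_set_def by (simp add: sum.cartesian_product case_prod_beta)

lemma tr_inner_le_frob_norm:
  assumes X: "X \<in> carrier_mat p q" and Y: "Y \<in> carrier_mat p q"
  shows "\<bar>tr_inner X Y\<bar> \<le> frob_norm X * frob_norm Y"
proof -
  have "\<bar>tr_inner X Y\<bar> = \<bar>\<Sum>ij\<in>{..<p} \<times> {..<q}. (\<lambda>(i,j). X $$ (i,j)) ij * (\<lambda>(i,j). Y $$ (i,j)) ij\<bar>"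
    unfolding tr_inner_carrier[OF X] by (simp add: sum.cartesian_product case_prod_beta)
  also have "\<dots> \<le> (\<Sum>ij\<in>{..<p} \<times> {..<q}. \<bar>(\<lambda>(i,j). X $$ (i,j)) ij\<bar> * \<bar>(\<lambda>(i,j). Y $$ (i,j)) ij\<bar>)"
    by (rule order.trans[OF sum_abs]) (simp add: abs_mult)
  also have "\<dots> \<le> frob_norm X * frob_norm Y"
    unfolding frob_norm_L2_set[OF X] frob_norm_L2_set[OF Y] by (rule L2_set_mult_ineq)
  finally show ?thesis .
qed

lemma frob_norm_add_le:
  assumes X: "X \<in> carrier_mat p q" and Y: "Y \<in> carrier_mat p q"
  shows "frob_norm (X + Y) \<le> frob_norm X + frob_norm Y"
proof -
  have XY: "X + Y \<in> carrier_mat p q" using Y by simp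
  have "frob_norm (X + Y)
      = L2_set (\<lambda>ij. (\<lambda>(i,j). X $$ (i,j)) ij + (\<lambda>(i,j). Y $$ (i,j)) ij) ({..<p} \<times> {..<q})"
    unfolding frob_norm_L2_set[OF XY] using X Y by (intro L2_set_cong) auto
  also have "\<dots> \<le> frob_norm X + frob_norm Y"
    unfolding frob_norm_L2_set[OF X] frob_norm_L2_set[OF Y] by (rule L2_set_triangle_ineq)
  finally show ?thesis .
qed

lemma frob_norm_smult: "frob_norm (c \<cdot>\<^sub>m X) = \<bar>c\<bar> * frob_norm X"
proof -
  have "frob_norm (c \<cdot>\<^sub>m X) = sqrt (c^2 * (\<Sum>i<dim_row X. \<Sum>j<dim_col X. (X $$ (i,j))^2))"
    unfolding frob_norm_def by (simp add: power_mult_distrib sum_distrib_left)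
  thus ?thesis unfolding frob_norm_def by (simp add: real_sqrt_mult)
qed

lemma frob_norm_eq_0_iff:
  assumes X: "X \<in> carrier_mat p q"
  shows "frob_norm X = 0 \<longleftrightarrow> X = 0\<^sub>m p q"
proof
  assume "frob_norm X = 0"
  hence "tr_inner X X = 0" unfolding frob_norm_tr_inner using tr_inner_self_nonneg[of X] by simp
  thus "X = 0\<^sub>m p q" using tr_inner_self_eq_0[OF X] by simp
qed (simp add: frob_norm_def)

lemma scalar_prod_le_sqrt:
  fixes u w :: "real vec"
  assumes u: "u \<in> carrier_vec n" and w: "w \<in> carrier_vec n"
  shows "u \<bullet> w \<le> sqrt (u \<bullet> u) * sqrt (w \<bullet> w)"
proof -
  have L2: "sqrt (v \<bullet> v) = L2_set (\<lambda>i. v $ i) {0..<n}" if "v \<in> carrier_vec n" for v :: "real vec"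
    using that unfolding L2_set_def scalar_prod_def by (simp add: power2_eq_square)
  have "u \<bullet> w = (\<Sum>i\<in>{0..<n}. u $ i * w $ i)" using w unfolding scalar_prod_def by simp
  also have "\<dots> \<le> (\<Sum>i\<in>{0..<n}. \<bar>u $ i\<bar> * \<bar>w $ i\<bar>)"
    by (intro sum_mono) (metis abs_ge_self abs_mult)
  also have "\<dots> \<le> sqrt (u \<bullet> u) * sqrt (w \<bullet> w)" unfolding L2[OF u] L2[OF w]
    by (rule L2_set_mult_ineq)
  finally show ?thesis .
qed

lemma scalar_prod_mult_mat_vec_self:
  fixes B :: "real mat"
  assumes B: "B \<in> carrier_mat p q" and x: "x \<in> carrier_vec q"
  shows "(B *\<^sub>v x) \<bullet> (B *\<^sub>v x) = x \<bullet> ((transpose_mat B * B) *\<^sub>v x)"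
proof -
  have "(B *\<^sub>v x) \<bullet> (B *\<^sub>v x) = (transpose_mat B *\<^sub>v (B *\<^sub>v x)) \<bullet> x"
    using transpose_vec_mult_scalar[OF B x, of "B *\<^sub>v x"] B x by simp
  also have "\<dots> = x \<bullet> (transpose_mat B *\<^sub>v (B *\<^sub>v x))"
    using B x by (intro comm_scalar_prod[of _ q]) auto
  also have "transpose_mat B *\<^sub>v (B *\<^sub>v x) = (transpose_mat B * B) *\<^sub>v x"
    using B x by (simp add: assoc_mult_mat_vec)
  finally show ?thesis .
qed

lemma sum_squares_le_square_sum:
  "finite S \<Longrightarrow> (\<And>i. i \<in> S \<Longrightarrow> (a i :: real) \<ge> 0) \<Longrightarrow> (\<Sum>i\<in>S. (a i)^2) \<le> (\<Sum>i\<in>S. a i)^2"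
proof -
  assume S: "finite S" and a: "\<And>i. i \<in> S \<Longrightarrow> a i \<ge> 0"
  have "(\<Sum>i\<in>S. (a i)^2) \<le> (\<Sum>i\<in>S. a i * (\<Sum>j\<in>S. a j))"
    unfolding power2_eq_square
    by (intro sum_mono mult_left_mono) (use a S in \<open>auto intro: member_le_sum\<close>)
  also have "\<dots> = (\<Sum>i\<in>S. a i)^2" by (simp add: power2_eq_square sum_distrib_right)
  finally show ?thesis .
qed

section \<open>Operator bounds and the nuclear norm\<close>

definition spectral_le :: "real mat \<Rightarrow> real \<Rightarrow> bool" where
  "spectral_le B c \<longleftrightarrow> (\<forall>x \<in> carrier_vec (dim_col B). (B *\<^sub>v x) \<bullet> (B *\<^sub>v x) \<le> c\<^sup>2 * (x \<bullet> x))"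

text \<open>Idempotence of \<open>B\<^sup>T B\<close> says that it is the orthogonal projection onto the row space
  of \<open>B\<close>.\<close>

definition partial_isometry :: "real mat \<Rightarrow> bool" where
  "partial_isometry B \<longleftrightarrow>
     (transpose_mat B * B) * (transpose_mat B * B) = transpose_mat B * B"

lemma spectral_le_mono: "spectral_le B c \<Longrightarrow> 0 \<le> c \<Longrightarrow> c \<le> c' \<Longrightarrow> spectral_le B c'"
  unfolding spectral_le_def
  by (meson order.trans mult_right_mono power_mono scalar_prod_self_nonneg)

lemma partial_isometry_spectral_le:
  fixes B :: "real mat"
  assumes B: "B \<in> carrier_mat p q" and iso: "partial_isometry B"
  shows "spectral_le B 1"
  unfolding spectral_le_def
proof
  fix x :: "real vec" assume "x \<in> carrier_vec (dim_col B)"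
  hence x: "x \<in> carrier_vec q" using B by simp
  define w where "w = (transpose_mat B * B) *\<^sub>v x"
  have w: "w \<in> carrier_vec q" unfolding w_def using B x by simp
  have ww: "w \<bullet> w = x \<bullet> w"
    unfolding w_def using scalar_prod_mult_mat_vec_self[OF mult_carrier_mat[of _ q p _ q] x] B iso
    by (simp add: transpose_mult[of _ q p _ q] partial_isometry_def)
  have "0 \<le> (x - w) \<bullet> (x - w)" by (rule scalar_prod_self_nonneg)
  also have "\<dots> = x \<bullet> x - x \<bullet> w - (w \<bullet> x - w \<bullet> w)"
    using x w by (simp add: minus_scalar_prod_distrib[of _ q] scalar_prod_minus_distrib[of _ q])
  finally show "(B *\<^sub>v x) \<bullet> (B *\<^sub>v x) \<le> 1\<^sup>2 * (x \<bullet> x)"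
    using ww comm_scalar_prod[OF w x] scalar_prod_mult_mat_vec_self[OF B x] unfolding w_def
    by simp
qed

lemma spectral_norm_nonneg: "spectral_norm A \<ge> 0"
  unfolding spectral_norm_def by simp

lemma transpose_mat_diag [simp]: "transpose_mat (mat_diag n d) = mat_diag n d"
  unfolding mat_diag_def by (rule eq_matI) auto

lemma tr_inner_mat_diag: "tr_inner (mat_diag n a) (mat_diag n b) = (\<Sum>i<n. a i * b i)"
proof -
  have "tr_inner (mat_diag n a) (mat_diag n b) = (\<Sum>i<n. \<Sum>j<n. if j = i then a i * b i else 0)"
    unfolding tr_inner_def mat_diag_def by (intro sum.cong refl) auto
  also have "\<dots> = (\<Sum>i<n. a i * b i)" by (rule sum.cong) (auto simp: sum.delta)
  finally show ?thesis .
qed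

lemma mat_diag_mult_vec: "y \<in> carrier_vec n \<Longrightarrow> mat_diag n d *\<^sub>v y = vec n (\<lambda>i. d i * y $ i)"
  by (rule eq_vecI) (auto simp: mat_diag_def scalar_prod_def if_distrib[of "\<lambda>z. z * _"] cong: if_cong)

lemma scalar_prod_mat_diag:
  "(y :: real vec) \<in> carrier_vec n \<Longrightarrow> y \<bullet> (mat_diag n d *\<^sub>v y) = (\<Sum>i<n. d i * (y $ i)\<^sup>2)"
  by (auto simp: mat_diag_mult_vec scalar_prod_def lessThan_atLeast0 intro!: sum.cong)
    (simp add: power2_eq_square)

lemma proots_prod_linear: "proots (\<Prod>a\<leftarrow>as. [:- a, 1:]) = mset (as :: real list)"
proof (induction as)
  case (Cons a as)
  have "(\<Prod>a\<leftarrow>as. [:- a, 1:]) \<noteq> (0 :: real poly)" by (auto simp: prod_list_zero_iff)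
  hence "proots ([:- a, 1:] * (\<Prod>a\<leftarrow>as. [:- a, 1:]))
      = proots [:- a, 1:] + proots (\<Prod>a\<leftarrow>as. [:- a, 1:])"
    by (intro proots_mult) auto
  thus ?case using Cons by (simp only: prod_list.Cons list.map proots_linear_factor) simp
qed simp

locale gram_eigenbasis =
  fixes n :: nat and A Q :: "real mat" and d :: "nat \<Rightarrow> real"
  assumes A: "A \<in> carrier_mat n n" and Q: "Q \<in> carrier_mat n n"
    and QQ: "transpose_mat Q * Q = 1\<^sub>m n" and QQ': "Q * transpose_mat Q = 1\<^sub>m n"
    and d_nonneg: "\<And>i. i < n \<Longrightarrow> d i \<ge> 0"
    and AQ: "transpose_mat (A * Q) * (A * Q) = mat_diag n d"
    and gram: "transpose_mat A * A = Q * mat_diag n d * transpose_mat Q"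
    and singular_values: "singular_values A = mset (map (\<lambda>i. sqrt (d i)) [0..<n])"
begin

lemma QT: "transpose_mat Q \<in> carrier_mat n n"
  using Q by simp

lemma nuclear_norm_eq: "nuclear_norm A = (\<Sum>i<n. sqrt (d i))"
  unfolding nuclear_norm_def singular_values sum_mset_sum_list interv_sum_list_conv_sum_set_nat
  by (simp add: lessThan_atLeast0)

lemma eigenvalue_le_spectral_norm: "i < n \<Longrightarrow> d i \<le> (spectral_norm A)\<^sup>2"
proof -
  assume i: "i < n"
  have "sqrt (d i) \<le> spectral_norm A"
    unfolding spectral_norm_def singular_values using i by (intro Max_ge) auto
  hence "(sqrt (d i))\<^sup>2 \<le> (spectral_norm A)\<^sup>2" using d_nonneg[OF i] by (intro power_mono) auto
  thus ?thesis using d_nonneg[OF i] by simp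
qed

lemma norm_mult_col: "i < n \<Longrightarrow> (A *\<^sub>v col Q i) \<bullet> (A *\<^sub>v col Q i) = d i"
proof -
  assume i: "i < n"
  have "d i = (transpose_mat (A * Q) * (A * Q)) $$ (i,i)" unfolding AQ mat_diag_def using i by simp
  also have "\<dots> = col (A * Q) i \<bullet> col (A * Q) i" using A Q i by (simp add: row_transpose)
  finally show ?thesis using A Q i by simp
qed

lemma norm_col: "i < n \<Longrightarrow> col Q i \<bullet> col Q i = 1"
proof -
  assume i: "i < n"
  have "col Q i \<bullet> col Q i = (transpose_mat Q * Q) $$ (i,i)" using Q i by (simp add: row_transpose)
  thus ?thesis using QQ i by simp
qed

lemma tr_inner_eq_sum_cols:
  assumes B: "B \<in> carrier_mat n n"
  shows "tr_inner B A = (\<Sum>i<n. (B *\<^sub>v col Q i) \<bullet> (A *\<^sub>v col Q i))"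
proof -
  have "A * Q * transpose_mat Q = A"
    using assoc_mult_mat[OF A Q QT] QQ' A by simp
  hence "tr_inner B A = tr_inner (B * Q) (A * Q)"
    using tr_inner_mult_right[OF B Q mult_carrier_mat[OF A Q]] by simp
  also have "\<dots> = (\<Sum>j<n. col (B * Q) j \<bullet> col (A * Q) j)"
    using B Q A by (intro tr_inner_cols) auto
  also have "\<dots> = (\<Sum>i<n. (B *\<^sub>v col Q i) \<bullet> (A *\<^sub>v col Q i))"
    using B Q A by (intro sum.cong refl) auto
  finally show ?thesis .
qed

lemma tr_inner_le_nuclear_norm:
  assumes B: "B \<in> carrier_mat n n" and c: "c \<ge> 0" and Bc: "spectral_le B c"
  shows "tr_inner B A \<le> c * nuclear_norm A"
proof -
  have "(B *\<^sub>v col Q i) \<bullet> (A *\<^sub>v col Q i) \<le> c * sqrt (d i)" if i: "i < n" for i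
  proof -
    have qi: "col Q i \<in> carrier_vec n" using Q i by simp
    have "(B *\<^sub>v col Q i) \<bullet> (B *\<^sub>v col Q i) \<le> c\<^sup>2"
      using Bc qi norm_col[OF i] B unfolding spectral_le_def by auto
    hence "sqrt ((B *\<^sub>v col Q i) \<bullet> (B *\<^sub>v col Q i)) \<le> c"
      using c real_sqrt_le_mono by fastforce
    moreover have "(B *\<^sub>v col Q i) \<bullet> (A *\<^sub>v col Q i)
        \<le> sqrt ((B *\<^sub>v col Q i) \<bullet> (B *\<^sub>v col Q i)) * sqrt ((A *\<^sub>v col Q i) \<bullet> (A *\<^sub>v col Q i))"
      using B A qi by (intro scalar_prod_le_sqrt[of _ n]) auto
    ultimately show ?thesis unfolding norm_mult_col[OF i]
      by (meson order.trans mult_right_mono real_sqrt_ge_zero d_nonneg i)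
  qed
  hence "tr_inner B A \<le> (\<Sum>i<n. c * sqrt (d i))"
    unfolding tr_inner_eq_sum_cols[OF B] by (intro sum_mono) auto
  thus ?thesis unfolding nuclear_norm_eq by (simp add: sum_distrib_left)
qed

lemma frob_norm_le_nuclear_norm: "frob_norm A \<le> nuclear_norm A"
proof -
  have "tr_inner A A = (\<Sum>i<n. (sqrt (d i))\<^sup>2)"
    unfolding tr_inner_eq_sum_cols[OF A] by (intro sum.cong refl) (simp add: norm_mult_col d_nonneg)
  also have "\<dots> \<le> (\<Sum>i<n. sqrt (d i))\<^sup>2"
    by (rule sum_squares_le_square_sum) (auto simp: d_nonneg)
  finally have "sqrt (tr_inner A A) \<le> \<bar>\<Sum>i<n. sqrt (d i)\<bar>"
    using real_sqrt_le_mono by fastforce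
  also have "\<dots> = nuclear_norm A"
    unfolding nuclear_norm_eq by (intro abs_of_nonneg sum_nonneg) (simp add: d_nonneg)
  finally show ?thesis unfolding frob_norm_tr_inner .
qed

lemma spectral_le_spectral_norm: "spectral_le A (spectral_norm A)"
  unfolding spectral_le_def
proof
  fix x :: "real vec" assume "x \<in> carrier_vec (dim_col A)"
  hence x: "x \<in> carrier_vec n" using A by simp
  define y where "y = transpose_mat Q *\<^sub>v x"
  have y: "y \<in> carrier_vec n" unfolding y_def using Q x by simp
  have "(A *\<^sub>v x) \<bullet> (A *\<^sub>v x) = x \<bullet> (Q *\<^sub>v (mat_diag n d *\<^sub>v y))"
    using scalar_prod_mult_mat_vec_self[OF A x] gram Q x
    by (simp add: y_def assoc_mult_mat_vec[of _ n n _ n])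
  also have "\<dots> = y \<bullet> (mat_diag n d *\<^sub>v y)"
    using transpose_vec_mult_scalar[OF Q mult_mat_vec_carrier[OF mat_diag_dim y] x]
    unfolding y_def by simp
  also have "\<dots> = (\<Sum>i<n. d i * (y $ i)\<^sup>2)" using scalar_prod_mat_diag[OF y] .
  also have "\<dots> \<le> (\<Sum>i<n. (spectral_norm A)\<^sup>2 * (y $ i)\<^sup>2)"
    by (intro sum_mono mult_right_mono eigenvalue_le_spectral_norm) auto
  also have "\<dots> = (spectral_norm A)\<^sup>2 * (y \<bullet> y)"
    using y by (simp add: sum_distrib_left scalar_prod_def power2_eq_square lessThan_atLeast0)
  also have "y \<bullet> y = x \<bullet> x"
    using scalar_prod_mult_mat_vec_self[OF QT x] QQ' x unfolding y_def by simp
  finally show "(A *\<^sub>v x) \<bullet> (A *\<^sub>v x) \<le> (spectral_norm A)\<^sup>2 * (x \<bullet> x)" .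
qed

text \<open>The witness is the polar factor \<open>B = A Q diag(p) Q\<^sup>T\<close>, where \<open>p i = 1 / sqrt (d i)\<close>
  for \<open>d i > 0\<close> and \<open>p i = 0\<close> otherwise.\<close>

lemma dual_partial_isometry:
  obtains B where "B \<in> carrier_mat n n" "partial_isometry B" "tr_inner B A = nuclear_norm A"
    "\<And>k X. X \<in> carrier_mat n k \<Longrightarrow> transpose_mat X * A = 0\<^sub>m k n \<Longrightarrow> transpose_mat X * B = 0\<^sub>m k n"
    "\<And>k Y. Y \<in> carrier_mat n k \<Longrightarrow> A * Y = 0\<^sub>m n k \<Longrightarrow> B * Y = 0\<^sub>m n k"
proof -
  define M where "M = A * Q"
  have Mc: "M \<in> carrier_mat n n" unfolding M_def using A Q by simp
  have MTc: "transpose_mat M \<in> carrier_mat n n" using Mc by simp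
  have MM: "transpose_mat M * M = mat_diag n d" unfolding M_def using AQ .
  define p where "p i = (if d i > 0 then 1 / sqrt (d i) else 0)" for i
  define e where "e i = p i * (d i * p i)" for i
  define Dp where "Dp = mat_diag n p"
  have Dpc: "Dp \<in> carrier_mat n n" unfolding Dp_def by simp
  define B where "B = M * Dp * transpose_mat Q"
  have Bc: "B \<in> carrier_mat n n" unfolding B_def using Mc Dpc QT by simp
  have cm: "\<And>X Y. X \<in> carrier_mat n n \<Longrightarrow> Y \<in> carrier_mat n n \<Longrightarrow> X * Y \<in> carrier_mat n n"
    by auto
  note carr = Mc MTc Dpc QT Q A cm mat_diag_dim
  note assoc = assoc_mult_mat[of _ n n _ n _ n]
  have MTMX: "transpose_mat M * (M * X) = mat_diag n d * X" if "X \<in> carrier_mat n n" for X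
    using that carr by (simp flip: MM add: assoc)
  have QTQX: "transpose_mat Q * (Q * X) = X" if "X \<in> carrier_mat n n" for X
    using that carr by (simp flip: assoc add: QQ)
  have DDX: "mat_diag n a * (mat_diag n b * X) = mat_diag n (\<lambda>i. a i * b i) * X"
    if "X \<in> carrier_mat n n" for a b X
    using that by (simp flip: assoc)
  have "tr_inner B A = tr_inner (M * Dp) (A * Q)"
    unfolding B_def using tr_inner_mult_right[of "M * Dp" n n "transpose_mat Q" n A] carr by simp
  also have "\<dots> = tr_inner Dp (transpose_mat M * M)"
    unfolding M_def[symmetric] using tr_inner_mult_left[OF Mc Dpc Mc] .
  also have "\<dots> = (\<Sum>i<n. p i * d i)" unfolding MM Dp_def tr_inner_mat_diag ..
  also have "\<dots> = nuclear_norm A"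
  proof -
    have "p i * d i = sqrt (d i)" if "i < n" for i
      using d_nonneg[OF that] unfolding p_def by (auto simp: real_div_sqrt)
    thus ?thesis unfolding nuclear_norm_eq by (intro sum.cong refl) auto
  qed
  finally have tr: "tr_inner B A = nuclear_norm A" .
  have BT: "transpose_mat B = Q * (Dp * transpose_mat M)"
    unfolding B_def using carr by (simp add: transpose_mult[of _ n n _ n] Dp_def)
  have BB: "transpose_mat B * B = Q * (mat_diag n e * transpose_mat Q)"
  proof -
    have "transpose_mat B * B = Q * (Dp * (transpose_mat M * (M * (Dp * transpose_mat Q))))"
      unfolding BT by (simp add: carr assoc B_def)
    also have "\<dots> = Q * (mat_diag n e * transpose_mat Q)"
      by (simp add: carr MTMX[OF mult_carrier_mat[OF mat_diag_dim QT]] DDX[OF QT]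
          DDX[OF mult_carrier_mat[OF mat_diag_dim QT]] Dp_def e_def[abs_def])
    finally show ?thesis .
  qed
  have ee: "e i * e i = e i" for i
    unfolding e_def p_def by auto
  have iso: "partial_isometry B"
    unfolding partial_isometry_def BB
    by (simp add: carr assoc QTQX[OF mult_carrier_mat[OF mat_diag_dim QT]] DDX[OF QT] ee)
  have left: "transpose_mat U * B = 0\<^sub>m k n"
    if U: "U \<in> carrier_mat n k" and UA: "transpose_mat U * A = 0\<^sub>m k n" for k U
  proof -
    have UT: "transpose_mat U \<in> carrier_mat k n" using U by simp
    have "transpose_mat U * B = transpose_mat U * (A * (Q * (Dp * transpose_mat Q)))"
      unfolding B_def M_def by (simp add: carr assoc)
    also have "\<dots> = (transpose_mat U * A) * (Q * (Dp * transpose_mat Q))"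
      using carr UT by (simp add: assoc_mult_mat[OF UT A, of _ n])
    also have "\<dots> = 0\<^sub>m k n" unfolding UA using carr by simp
    finally show ?thesis .
  qed
  have right: "B * V = 0\<^sub>m n k" if V: "V \<in> carrier_mat n k" and AV: "A * V = 0\<^sub>m n k" for k V
  proof -
    define p2 where "p2 i = (if d i > 0 then 1 / (d i * sqrt (d i)) else 0)" for i
    have Dp2: "Dp = mat_diag n p2 * mat_diag n d"
      unfolding Dp_def mat_diag_diag p2_def p_def
      by (rule arg_cong[where f = "mat_diag n"]) (auto simp: fun_eq_iff)
    have QTV: "transpose_mat Q * V \<in> carrier_mat n k" using V QT by simp
    have "mat_diag n d * (transpose_mat Q * V) = transpose_mat M * (M * (transpose_mat Q * V))"
      using assoc_mult_mat[OF MTc Mc QTV] MM by simp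
    also have "M * (transpose_mat Q * V) = A * (Q * (transpose_mat Q * V))"
      unfolding M_def using assoc_mult_mat[OF A Q QTV] .
    also have "Q * (transpose_mat Q * V) = V"
      using assoc_mult_mat[OF Q QT V] QQ' V by simp
    also have "transpose_mat M * (A * V) = 0\<^sub>m n k" unfolding AV using MTc by simp
    finally have DQV: "mat_diag n d * (transpose_mat Q * V) = 0\<^sub>m n k" .
    have PD: "mat_diag n p2 * mat_diag n d \<in> carrier_mat n n"
      by (rule mult_carrier_mat[OF mat_diag_dim mat_diag_dim])
    have "B * V = M * (mat_diag n p2 * (mat_diag n d * (transpose_mat Q * V)))"
      unfolding B_def Dp2
      by (simp add: assoc_mult_mat[OF mult_carrier_mat[OF Mc PD] QT V] assoc_mult_mat[OF Mc PD QTV]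
          assoc_mult_mat[OF mat_diag_dim mat_diag_dim QTV] del: mat_diag_diag)
    also have "\<dots> = 0\<^sub>m n k"
      unfolding DQV using Mc right_mult_zero_mat[OF mat_diag_dim[of n p2]] by simp
    finally show ?thesis .
  qed
  show ?thesis using that[OF Bc iso tr] left right by blast
qed

end

lemma gram_eigenbasis_exists:
  fixes A :: "real mat"
  assumes A: "A \<in> carrier_mat n n"
  obtains Q d where "gram_eigenbasis n A Q d"
proof -
  define G where "G = transpose_mat A * A"
  have G: "G \<in> carrier_mat n n" unfolding G_def using A by simp
  have symG: "transpose_mat G = G" unfolding G_def using A
    by (simp add: transpose_mult[of _ n n _ n])
  obtain Q D where Q: "Q \<in> carrier_mat n n" and D: "D \<in> carrier_mat n n" and diag: "diagonal_mat D"
    and QQ: "transpose_mat Q * Q = 1\<^sub>m n" and GQ: "G = Q * D * transpose_mat Q"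
    using real_symmetric_orthogonal_diagonalization[OF G symG] by blast
  define d where "d i = D $$ (i,i)" for i
  have Dd: "D = mat_diag n d" unfolding mat_diag_def d_def using D diag
    by (intro eq_matI) (auto simp: diagonal_mat_def)
  have QTc: "transpose_mat Q \<in> carrier_mat n n" using Q by simp
  have QQ': "Q * transpose_mat Q = 1\<^sub>m n" using mat_mult_left_right_inverse[OF QTc Q QQ] .
  have AQ: "transpose_mat (A * Q) * (A * Q) = D"
  proof -
    have "transpose_mat (A * Q) * (A * Q) = transpose_mat Q * G * Q"
      unfolding G_def using A Q
      by (simp add: transpose_mult[of _ n n _ n] assoc_mult_mat[of _ n n _ n _ n])
    also have "\<dots> = (transpose_mat Q * Q) * D * (transpose_mat Q * Q)"
      unfolding GQ using Q D by (simp add: assoc_mult_mat[of _ n n _ n _ n])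
    also have "\<dots> = D" using QQ D by simp
    finally show ?thesis .
  qed
  have d_nonneg: "d i \<ge> 0" if i: "i < n" for i
  proof -
    have "d i = col (A * Q) i \<bullet> col (A * Q) i"
      unfolding d_def AQ[symmetric] using A Q i by (simp add: row_transpose)
    thus ?thesis using scalar_prod_self_nonneg by simp
  qed
  have "similar_mat G D" unfolding similar_mat_def similar_mat_wit_def
    by (rule exI[of _ Q], rule exI[of _ "transpose_mat Q"])
      (use G D Q QQ QQ' GQ in \<open>auto simp: Let_def\<close>)
  moreover have "upper_triangular D"
    using diag D unfolding upper_triangular_def diagonal_mat_def by auto
  ultimately have "char_poly G = (\<Prod>a\<leftarrow>diag_mat D. [:- a, 1:])"
    using char_poly_similar char_poly_upper_triangular[OF D] by metis
  hence "proots (char_poly G) = mset (diag_mat D)"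
    by (simp add: proots_prod_linear)
  also have "diag_mat D = map d [0..<n]"
    unfolding diag_mat_def d_def using D by simp
  finally have "proots (char_poly G) = mset (map d [0..<n])" .
  hence "singular_values A = mset (map (\<lambda>i. sqrt (d i)) [0..<n])"
    unfolding singular_values_def G_def by (simp add: multiset.map_comp o_def)
  hence "gram_eigenbasis n A Q d"
    using A Q QQ QQ' d_nonneg AQ GQ unfolding Dd G_def by unfold_locales auto
  thus ?thesis by (rule that)
qed

lemma frob_norm_le_nuclear_norm: "A \<in> carrier_mat n n \<Longrightarrow> frob_norm A \<le> nuclear_norm A"
  by (metis gram_eigenbasis_exists gram_eigenbasis.frob_norm_le_nuclear_norm)

lemma nuclear_norm_nonneg: "A \<in> carrier_mat n n \<Longrightarrow> nuclear_norm A \<ge> 0"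
  using frob_norm_le_nuclear_norm frob_norm_nonneg order.trans by blast

lemma tr_inner_le_nuclear_norm:
  "A \<in> carrier_mat n n \<Longrightarrow> B \<in> carrier_mat n n \<Longrightarrow> c \<ge> 0 \<Longrightarrow> spectral_le B c \<Longrightarrow>
   tr_inner B A \<le> c * nuclear_norm A"
  by (metis gram_eigenbasis_exists gram_eigenbasis.tr_inner_le_nuclear_norm)

lemma spectral_le_spectral_norm: "A \<in> carrier_mat n n \<Longrightarrow> spectral_le A (spectral_norm A)"
  by (metis gram_eigenbasis_exists gram_eigenbasis.spectral_le_spectral_norm)

lemma dual_partial_isometry_exists:
  assumes "A \<in> carrier_mat n n"
  obtains B where "B \<in> carrier_mat n n" "partial_isometry B" "tr_inner B A = nuclear_norm A"
    "\<And>k X. X \<in> carrier_mat n k \<Longrightarrow> transpose_mat X * A = 0\<^sub>m k n \<Longrightarrow> transpose_mat X * B = 0\<^sub>m k n"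
    "\<And>k Y. Y \<in> carrier_mat n k \<Longrightarrow> A * Y = 0\<^sub>m n k \<Longrightarrow> B * Y = 0\<^sub>m n k"
  by (metis assms gram_eigenbasis_exists gram_eigenbasis.dual_partial_isometry)

section \<open>Entrywise norms and coordinate projections\<close>

lemma P_Omega_carrier: "X \<in> carrier_mat p q \<Longrightarrow> P_Omega \<Omega> X \<in> carrier_mat p q"
  unfolding P_Omega_def by auto

lemma P_Omega_index [simp]:
  "i < dim_row X \<Longrightarrow> j < dim_col X \<Longrightarrow>
   P_Omega \<Omega> X $$ (i,j) = (if (i,j) \<in> \<Omega> then X $$ (i,j) else 0)"
  unfolding P_Omega_def by simp

lemma P_Omega_dims [simp]:
  "dim_row (P_Omega \<Omega> X) = dim_row X" "dim_col (P_Omega \<Omega> X) = dim_col X"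
  unfolding P_Omega_def by auto

lemma P_Omega_smult: "P_Omega \<Omega> (c \<cdot>\<^sub>m X) = c \<cdot>\<^sub>m P_Omega \<Omega> X"
  by (rule eq_matI) auto

lemma P_Omega_add:
  "X \<in> carrier_mat p q \<Longrightarrow> Y \<in> carrier_mat p q \<Longrightarrow>
   P_Omega \<Omega> (X + Y) = P_Omega \<Omega> X + P_Omega \<Omega> Y"
  by (rule eq_matI) auto

lemma P_Omega_add_P_Omega_compl: "P_Omega \<Omega> X + P_Omega (- \<Omega>) X = X"
  by (rule eq_matI) auto

lemma frob_norm_P_Omega_le: "frob_norm (P_Omega \<Omega> X) \<le> frob_norm X"
  unfolding frob_norm_def P_Omega_def
  by (simp, intro real_sqrt_le_mono sum_mono) auto

lemma l1_norm_nonneg: "l1_norm X \<ge> 0"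
  unfolding l1_norm_def by (intro sum_nonneg) auto

lemma frob_norm_le_l1_norm: "frob_norm X \<le> l1_norm X"
proof -
  let ?I = "{..<dim_row X} \<times> {..<dim_col X}"
  have "(\<Sum>i<dim_row X. \<Sum>j<dim_col X. (X $$ (i,j))\<^sup>2) = (\<Sum>ij\<in>?I. \<bar>X $$ ij\<bar>\<^sup>2)"
    by (simp add: sum.cartesian_product)
  also have "\<dots> \<le> (\<Sum>ij\<in>?I. \<bar>X $$ ij\<bar>)\<^sup>2"
    by (rule sum_squares_le_square_sum) auto
  also have "(\<Sum>ij\<in>?I. \<bar>X $$ ij\<bar>) = l1_norm X"
    unfolding l1_norm_def by (simp add: sum.cartesian_product)
  finally show ?thesis
    unfolding frob_norm_def using l1_norm_nonneg[of X] real_sqrt_le_mono by fastforce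
qed

lemma l1_norm_eq_0:
  assumes X: "X \<in> carrier_mat p q" and "l1_norm X = 0"
  shows "X = 0\<^sub>m p q"
  using frob_norm_le_l1_norm[of X] frob_norm_nonneg[of X] frob_norm_eq_0_iff[OF X] assms(2)
  by simp

lemma abs_le_max_norm:
  assumes "i < dim_row X" "j < dim_col X"
  shows "\<bar>X $$ (i,j)\<bar> \<le> max_norm X"
proof -
  have "{\<bar>X $$ (i,j)\<bar> | i j. i < dim_row X \<and> j < dim_col X}
      \<subseteq> (\<lambda>(i,j). \<bar>X $$ (i,j)\<bar>) ` ({..<dim_row X} \<times> {..<dim_col X})" by auto
  hence "finite {\<bar>X $$ (i,j)\<bar> | i j. i < dim_row X \<and> j < dim_col X}"
    by (rule finite_subset) simp
  thus ?thesis unfolding max_norm_def using assms by (intro Max_ge) auto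
qed

lemma l1_norm_diff_ge:
  assumes S: "S \<in> carrier_mat p q" and H: "H \<in> carrier_mat p q"
  shows "l1_norm S - tr_inner (sgn_mat S) H + l1_norm (P_Omega (- support S) H) \<le> l1_norm (S - H)"
proof -
  have "l1_norm S - tr_inner (sgn_mat S) H + l1_norm (P_Omega (- support S) H) =
    (\<Sum>i<p. \<Sum>j<q. \<bar>S $$ (i,j)\<bar> - sgn (S $$ (i,j)) * H $$ (i,j) +
       (if S $$ (i,j) = 0 then \<bar>H $$ (i,j)\<bar> else 0))"
    using S H unfolding l1_norm_def tr_inner_def sgn_mat_def support_def
    by (auto simp: sum.distrib sum_subtractf intro!: sum.cong)
  also have "\<dots> \<le> (\<Sum>i<p. \<Sum>j<q. \<bar>S $$ (i,j) - H $$ (i,j)\<bar>)"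
    by (intro sum_mono)
      (auto simp: sgn_if abs_if split: if_splits)
  also have "\<dots> = l1_norm (S - H)" unfolding l1_norm_def using S H by (auto intro!: sum.cong)
  finally show ?thesis .
qed

lemma tr_inner_vanishing_on_ge:
  assumes H: "H \<in> carrier_mat p q" and F: "F \<in> carrier_mat p q"
    and F0: "P_Omega \<Omega> F = 0\<^sub>m p q" and Fn: "max_norm F \<le> c"
  shows "- c * l1_norm (P_Omega (- \<Omega>) H) \<le> tr_inner F H"
proof -
  have Fz: "F $$ (i,j) = 0" if "i < p" "j < q" "(i,j) \<in> \<Omega>" for i j
    using arg_cong[OF F0, of "\<lambda>M. M $$ (i,j)"] that F by simp
  have Fb: "\<bar>F $$ (i,j)\<bar> \<le> c" if "i < p" "j < q" for i j
    using abs_le_max_norm[of i F j] that F Fn by auto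
  have "- c * l1_norm (P_Omega (- \<Omega>) H) =
      (\<Sum>i<p. \<Sum>j<q. - c * (if (i,j) \<in> \<Omega> then 0 else \<bar>H $$ (i,j)\<bar>))"
    using H unfolding l1_norm_def by (auto simp: sum_distrib_left intro!: sum.cong)
  also have "\<dots> \<le> (\<Sum>i<p. \<Sum>j<q. F $$ (i,j) * H $$ (i,j))"
  proof (intro sum_mono)
    fix i j assume "i \<in> {..<p}" "j \<in> {..<q}"
    hence ij: "i < p" "j < q" by auto
    have "\<bar>F $$ (i,j) * H $$ (i,j)\<bar> \<le> c * \<bar>H $$ (i,j)\<bar>"
      unfolding abs_mult by (rule mult_right_mono) (use Fb[OF ij] in auto)
    thus "- c * (if (i,j) \<in> \<Omega> then 0 else \<bar>H $$ (i,j)\<bar>) \<le> F $$ (i,j) * H $$ (i,j)"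
      using Fz[OF ij] by auto
  qed
  also have "\<dots> = tr_inner F H" using F unfolding tr_inner_def by simp
  finally show ?thesis .
qed

lemma tr_inner_P_Omega_ge:
  assumes D: "D \<in> carrier_mat p q" and H: "H \<in> carrier_mat p q"
    and Dn: "frob_norm (P_Omega \<Omega> D) \<le> c"
  shows "- c * frob_norm (P_Omega \<Omega> H) \<le> tr_inner (P_Omega \<Omega> D) H"
proof -
  have "tr_inner (P_Omega \<Omega> D) H = tr_inner (P_Omega \<Omega> D) (P_Omega \<Omega> H)"
    using D H unfolding tr_inner_def by (auto intro!: sum.cong)
  moreover have "\<bar>tr_inner (P_Omega \<Omega> D) (P_Omega \<Omega> H)\<bar>
      \<le> frob_norm (P_Omega \<Omega> D) * frob_norm (P_Omega \<Omega> H)"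
    using P_Omega_carrier D H by (intro tr_inner_le_frob_norm) auto
  moreover have "frob_norm (P_Omega \<Omega> D) * frob_norm (P_Omega \<Omega> H) \<le> c * frob_norm (P_Omega \<Omega> H)"
    by (rule mult_right_mono[OF Dn frob_norm_nonneg])
  ultimately show ?thesis by linarith
qed

lemma frob_norm_le_op_norm:
  fixes f :: "real mat \<Rightarrow> real mat"
  assumes hom: "\<And>X c. X \<in> carrier_mat n n \<Longrightarrow> f (c \<cdot>\<^sub>m X) = c \<cdot>\<^sub>m f X"
    and bd: "\<And>X. X \<in> carrier_mat n n \<Longrightarrow> frob_norm (f X) \<le> frob_norm X"
    and X: "X \<in> carrier_mat n n"
  shows "frob_norm (f X) \<le> op_norm n f * frob_norm X"
proof (cases "frob_norm X = 0")
  case True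
  have "f X = 0 \<cdot>\<^sub>m f X" using hom[OF X, of 0] X frob_norm_eq_0_iff[OF X] True by simp
  thus ?thesis using True frob_norm_smult[of 0 "f X"] by simp
next
  case False
  define t where "t = frob_norm X"
  have t: "t > 0" using False frob_norm_nonneg[of X] unfolding t_def by simp
  define S where "S = {frob_norm (f X) | X. X \<in> carrier_mat n n \<and> frob_norm X \<le> 1}"
  have "bdd_above S" unfolding S_def
    by (rule bdd_aboveI[of _ 1]) (auto intro: order.trans[OF bd])
  moreover have "frob_norm (f ((1 / t) \<cdot>\<^sub>m X)) \<in> S"
    unfolding S_def using X t by (auto simp: frob_norm_smult t_def)
  ultimately have "frob_norm (f ((1 / t) \<cdot>\<^sub>m X)) \<le> op_norm n f"
    unfolding op_norm_def S_def by (rule cSup_upper[rotated])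
  moreover have "frob_norm (f ((1 / t) \<cdot>\<^sub>m X)) = frob_norm (f X) / t"
    unfolding hom[OF X] frob_norm_smult using t by simp
  ultimately show ?thesis using t unfolding t_def by (simp add: field_simps)
qed

lemma partial_isometry_add_orthogonal:
  fixes U V B :: "real mat"
  assumes U: "U \<in> carrier_mat n r" and V: "V \<in> carrier_mat n r"
    and UU: "transpose_mat U * U = 1\<^sub>m r" and VV: "transpose_mat V * V = 1\<^sub>m r"
    and B: "B \<in> carrier_mat n n" and iso: "partial_isometry B"
    and UB: "transpose_mat U * B = 0\<^sub>m r n" and BV: "B * V = 0\<^sub>m n r"
  shows "partial_isometry (U * transpose_mat V + B)"
proof -
  have UT: "transpose_mat U \<in> carrier_mat r n" and VT: "transpose_mat V \<in> carrier_mat r n"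
    and BT: "transpose_mat B \<in> carrier_mat n n" using U V B by auto
  have UVT: "U * transpose_mat V \<in> carrier_mat n n" using U VT by simp
  have VUT: "V * transpose_mat U \<in> carrier_mat n n" using V UT by simp
  have VVT: "V * transpose_mat V \<in> carrier_mat n n" using V VT by simp
  have BTB: "transpose_mat B * B \<in> carrier_mat n n" using BT B by simp
  have BTU: "transpose_mat B * U = 0\<^sub>m n r"
    using transpose_mult[OF UT B] UB by simp
  have VTBT: "transpose_mat V * transpose_mat B = 0\<^sub>m r n"
    using transpose_mult[OF B V] BV by simp
  define M where "M = U * transpose_mat V + B"
  have MT: "transpose_mat M = V * transpose_mat U + transpose_mat B"
    unfolding M_def using transpose_add[OF UVT B] transpose_mult[OF U VT] by simp
  have t1: "V * transpose_mat U * (U * transpose_mat V) = V * transpose_mat V"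
    using assoc_mult_mat[OF V UT UVT] assoc_mult_mat[OF UT U VT, symmetric] UU VT by simp
  have t2: "V * transpose_mat U * B = 0\<^sub>m n n"
    using assoc_mult_mat[OF V UT B] UB V by simp
  have t3: "transpose_mat B * (U * transpose_mat V) = 0\<^sub>m n n"
    using assoc_mult_mat[OF BT U VT, symmetric] BTU VT by simp
  define P where "P = V * transpose_mat V + transpose_mat B * B"
  have MM: "transpose_mat M * M = P"
  proof -
    have "transpose_mat M * M = (V * transpose_mat U + transpose_mat B) * (U * transpose_mat V) +
        (V * transpose_mat U + transpose_mat B) * B"
      unfolding MT by (subst M_def, rule mult_add_distrib_mat[of _ n n]) (use VUT BT UVT B in auto)
    also have "(V * transpose_mat U + transpose_mat B) * (U * transpose_mat V) = V * transpose_mat V"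
      using add_mult_distrib_mat[OF VUT BT UVT] t1 t3 VVT by simp
    also have "(V * transpose_mat U + transpose_mat B) * B = transpose_mat B * B"
      using add_mult_distrib_mat[OF VUT BT B] t2 BTB by simp
    finally show ?thesis unfolding P_def .
  qed
  have s1: "V * transpose_mat V * (V * transpose_mat V) = V * transpose_mat V"
    using assoc_mult_mat[OF V VT VVT] assoc_mult_mat[OF VT V VT, symmetric] VV VT by simp
  have "V * transpose_mat V * (transpose_mat B * B) = V * ((transpose_mat V * transpose_mat B) * B)"
    using assoc_mult_mat[OF V VT BTB] assoc_mult_mat[OF VT BT B] by simp
  hence s2: "V * transpose_mat V * (transpose_mat B * B) = 0\<^sub>m n n"
    unfolding VTBT using V B by simp
  have "transpose_mat B * B * (V * transpose_mat V) = transpose_mat B * ((B * V) * transpose_mat V)"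
    using assoc_mult_mat[OF BT B VVT] assoc_mult_mat[OF B V VT] by simp
  hence s3: "transpose_mat B * B * (V * transpose_mat V) = 0\<^sub>m n n"
    unfolding BV using BT VT by simp
  have "P * P = (V * transpose_mat V + transpose_mat B * B) * (V * transpose_mat V) +
      (V * transpose_mat V + transpose_mat B * B) * (transpose_mat B * B)"
    unfolding P_def by (rule mult_add_distrib_mat[of _ n n]) (use VVT BTB in auto)
  also have "(V * transpose_mat V + transpose_mat B * B) * (V * transpose_mat V) = V * transpose_mat V"
    using add_mult_distrib_mat[OF VVT BTB VVT] s1 s3 VVT by simp
  also have "(V * transpose_mat V + transpose_mat B * B) * (transpose_mat B * B) = transpose_mat B * B"
    using add_mult_distrib_mat[OF VVT BTB BTB] s2 iso BTB unfolding partial_isometry_def by simp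
  finally show ?thesis unfolding partial_isometry_def M_def[symmetric] MM P_def .
qed

section \<open>The tangent space of a rank-r matrix\<close>

locale orthonormal_frames =
  fixes n r :: nat and U V :: "real mat"
  assumes U: "U \<in> carrier_mat n r" and V: "V \<in> carrier_mat n r"
    and UU: "transpose_mat U * U = 1\<^sub>m r" and VV: "transpose_mat V * V = 1\<^sub>m r"
begin

abbreviation T :: "real mat set" where
  "T \<equiv> tangent_space n U V"

definition P_T_perp :: "real mat \<Rightarrow> real mat" where
  "P_T_perp X = (1\<^sub>m n - U * transpose_mat U) * X * (1\<^sub>m n - V * transpose_mat V)"

definition P_T :: "real mat \<Rightarrow> real mat" where
  "P_T X = X - P_T_perp X"

lemma UT: "transpose_mat U \<in> carrier_mat r n"
  using U by simp

lemma VT: "transpose_mat V \<in> carrier_mat r n"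
  using V by simp

lemma proj_U_compl: "1\<^sub>m n - U * transpose_mat U \<in> carrier_mat n n"
  using U UT by (intro minus_carrier_mat mult_carrier_mat)

lemma proj_V_compl: "1\<^sub>m n - V * transpose_mat V \<in> carrier_mat n n"
  using V VT by (intro minus_carrier_mat mult_carrier_mat)

lemma P_T_perp_carrier: "X \<in> carrier_mat n n \<Longrightarrow> P_T_perp X \<in> carrier_mat n n"
  unfolding P_T_perp_def using proj_U_compl proj_V_compl by simp

lemma P_T_carrier: "X \<in> carrier_mat n n \<Longrightarrow> P_T X \<in> carrier_mat n n"
  unfolding P_T_def using P_T_perp_carrier by (intro minus_carrier_mat)

lemma P_T_add_P_T_perp: "X \<in> carrier_mat n n \<Longrightarrow> P_T X + P_T_perp X = X"
  unfolding P_T_def by (frule P_T_perp_carrier) (intro eq_matI, auto)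

lemma minus_P_T: "X \<in> carrier_mat n n \<Longrightarrow> X - P_T X = P_T_perp X"
  unfolding P_T_def by (frule P_T_perp_carrier) (intro eq_matI, auto)

lemma U_transpose_P_T_perp:
  assumes X: "X \<in> carrier_mat n n"
  shows "transpose_mat U * P_T_perp X = 0\<^sub>m r n"
proof -
  have "transpose_mat U * (1\<^sub>m n - U * transpose_mat U) = transpose_mat U - transpose_mat U"
    using mult_minus_distrib_mat[OF UT one_carrier_mat mult_carrier_mat[OF U UT]]
      assoc_mult_mat[OF UT U UT] UU UT by simp
  hence "transpose_mat U * (1\<^sub>m n - U * transpose_mat U) = 0\<^sub>m r n"
    using UT by simp
  moreover have "transpose_mat U * P_T_perp X
      = transpose_mat U * (1\<^sub>m n - U * transpose_mat U) * X * (1\<^sub>m n - V * transpose_mat V)"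
    unfolding P_T_perp_def using proj_U_compl proj_V_compl X
    by (simp add: assoc_mult_mat[OF UT proj_U_compl X]
        assoc_mult_mat[OF UT _ proj_V_compl, of "(1\<^sub>m n - U * transpose_mat U) * X"])
  ultimately show ?thesis using left_mult_zero_mat[OF X] left_mult_zero_mat[OF proj_V_compl] by simp
qed

lemma P_T_perp_V:
  assumes X: "X \<in> carrier_mat n n"
  shows "P_T_perp X * V = 0\<^sub>m n r"
proof -
  have "(1\<^sub>m n - V * transpose_mat V) * V = V - V"
    using minus_mult_distrib_mat[OF one_carrier_mat mult_carrier_mat[OF V VT] V]
      assoc_mult_mat[OF V VT V] VV V by simp
  hence "(1\<^sub>m n - V * transpose_mat V) * V = 0\<^sub>m n r"
    using V by simp
  moreover have "P_T_perp X * V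
      = ((1\<^sub>m n - U * transpose_mat U) * X) * ((1\<^sub>m n - V * transpose_mat V) * V)"
    unfolding P_T_perp_def using proj_U_compl X
    by (simp add: assoc_mult_mat[OF _ proj_V_compl V, of _ n])
  ultimately show ?thesis using X proj_U_compl U by simp
qed

lemma tr_inner_tangent_eq_0:
  assumes Z: "Z \<in> carrier_mat n n" and UZ: "transpose_mat U * Z = 0\<^sub>m r n"
    and ZV: "Z * V = 0\<^sub>m n r" and Y: "Y \<in> T"
  shows "tr_inner Z Y = 0"
proof -
  from Y obtain X' Y' where X': "X' \<in> carrier_mat n r" and Y': "Y' \<in> carrier_mat n r"
    and Yeq: "Y = U * transpose_mat X' + Y' * transpose_mat V"
    unfolding tangent_space_def using U V by auto
  have X'T: "transpose_mat X' \<in> carrier_mat r n" using X' by simp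
  have c1: "U * transpose_mat X' \<in> carrier_mat n n" using U X'T by simp
  have c2: "Y' * transpose_mat V \<in> carrier_mat n n" using Y' VT by simp
  have "tr_inner Z (U * transpose_mat X') = tr_inner (transpose_mat X') (transpose_mat U * Z)"
    using tr_inner_commute[OF Z c1] tr_inner_mult_left[OF U X'T Z] by simp
  also have "\<dots> = 0" unfolding UZ using X'T tr_inner_zero_right[of "transpose_mat X'"] by simp
  finally have 1: "tr_inner Z (U * transpose_mat X') = 0" .
  have "tr_inner Z (Y' * transpose_mat V) = tr_inner Y' (Z * V)"
    using tr_inner_commute[OF Z c2] tr_inner_mult_right[OF Y' VT Z] by simp
  also have "\<dots> = 0" unfolding ZV using Y' tr_inner_zero_right[of Y'] by simp
  finally have 2: "tr_inner Z (Y' * transpose_mat V) = 0" .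
  show ?thesis unfolding Yeq using tr_inner_add_right[OF Z c1 c2] 1 2 by simp
qed

lemma tr_inner_P_T_perp_tangent: "X \<in> carrier_mat n n \<Longrightarrow> Y \<in> T \<Longrightarrow> tr_inner (P_T_perp X) Y = 0"
  using tr_inner_tangent_eq_0 P_T_perp_carrier U_transpose_P_T_perp P_T_perp_V by blast

lemma P_T_in_tangent_space:
  assumes X: "X \<in> carrier_mat n n"
  shows "P_T X \<in> T"
proof -
  define Y where "Y = (1\<^sub>m n - U * transpose_mat U) * X"
  have Yc: "Y \<in> carrier_mat n n" unfolding Y_def using proj_U_compl X by simp
  have UUX: "U * transpose_mat U * X \<in> carrier_mat n n" using U X by simp
  have YVV: "Y * (V * transpose_mat V) \<in> carrier_mat n n" using Yc V by simp
  have "P_T_perp X = Y - Y * (V * transpose_mat V)"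
    unfolding P_T_perp_def Y_def[symmetric]
    using mult_minus_distrib_mat[OF Yc one_carrier_mat mult_carrier_mat[OF V VT]] Yc by simp
  moreover have "Y = X - U * transpose_mat U * X"
    unfolding Y_def using minus_mult_distrib_mat[OF one_carrier_mat mult_carrier_mat[OF U UT] X] X
    by simp
  moreover have "A - ((A - B) - C) = B + C"
    if "A \<in> carrier_mat n n" "B \<in> carrier_mat n n" "C \<in> carrier_mat n n" for A B C :: "real mat"
    using that by (intro eq_matI) auto
  ultimately have "P_T X = U * transpose_mat U * X + Y * (V * transpose_mat V)"
    unfolding P_T_def using YVV UUX X by metis
  also have "U * transpose_mat U * X = U * transpose_mat (transpose_mat X * U)"
    using transpose_mult[OF _ U, of "transpose_mat X" n] X assoc_mult_mat[OF U UT X] by simp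
  also have "Y * (V * transpose_mat V) = (Y * V) * transpose_mat V"
    using assoc_mult_mat[OF Yc V VT] by simp
  finally have "P_T X = U * transpose_mat (transpose_mat X * U) + (Y * V) * transpose_mat V" .
  moreover have "transpose_mat X * U \<in> carrier_mat n (dim_col U)" using X U by simp
  moreover have "Y * V \<in> carrier_mat n (dim_col V)" using Yc V by simp
  ultimately show ?thesis unfolding tangent_space_def by blast
qed

lemma tangent_space_diff:
  assumes "A \<in> T" "B \<in> T"
  shows "A - B \<in> T"
proof -
  from assms obtain X Y X' Y' where X: "X \<in> carrier_mat n r" and Y: "Y \<in> carrier_mat n r"
    and X': "X' \<in> carrier_mat n r" and Y': "Y' \<in> carrier_mat n r"
    and A: "A = U * transpose_mat X + Y * transpose_mat V"
    and B: "B = U * transpose_mat X' + Y' * transpose_mat V"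
    unfolding tangent_space_def using U V by auto
  have "U * transpose_mat (X - X') = U * transpose_mat X - U * transpose_mat X'"
    using mult_minus_distrib_mat[OF U, of "transpose_mat X" n "transpose_mat X'"] X X'
    by (simp add: transpose_minus)
  moreover have "(Y - Y') * transpose_mat V = Y * transpose_mat V - Y' * transpose_mat V"
    using minus_mult_distrib_mat[OF Y Y' VT] .
  ultimately have "A - B = U * transpose_mat (X - X') + (Y - Y') * transpose_mat V"
    unfolding A B using X X' Y Y' U V by (intro eq_matI) auto
  moreover have "X - X' \<in> carrier_mat n (dim_col U)" "Y - Y' \<in> carrier_mat n (dim_col V)"
    using X X' Y Y' U V by auto
  ultimately show ?thesis unfolding tangent_space_def by blast
qed

lemma tangent_space_carrier: "Y \<in> T \<Longrightarrow> Y \<in> carrier_mat n n"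
  using U V unfolding tangent_space_def by auto

lemma orth_proj_tangent_space:
  assumes X: "X \<in> carrier_mat n n"
  shows "orth_proj T X = P_T X"
  unfolding orth_proj_def
proof (rule the_equality)
  note XP = minus_P_T[OF X]
  thus "P_T X \<in> T \<and> (\<forall>Y\<in>T. tr_inner (X - P_T X) Y = 0)"
    using P_T_in_tangent_space[OF X] tr_inner_P_T_perp_tangent[OF X] by simp
  fix P assume P: "P \<in> T \<and> (\<forall>Y\<in>T. tr_inner (X - P) Y = 0)"
  have D: "P - P_T X \<in> T" using tangent_space_diff P P_T_in_tangent_space[OF X] by simp
  have Pc: "P \<in> carrier_mat n n" using P tangent_space_carrier by blast
  have eq: "P - P_T X = (X - P_T X) - (X - P)"
    using Pc P_T_carrier[OF X] X by (intro eq_matI) auto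
  have "tr_inner (P - P_T X) (P - P_T X)
      = tr_inner (X - P_T X) (P - P_T X) - tr_inner (X - P) (P - P_T X)"
    using tr_inner_minus_left[of "X - P_T X" n n "X - P" "P - P_T X"]
      minus_carrier_mat[OF P_T_carrier[OF X]] minus_carrier_mat[OF Pc]
    unfolding eq[symmetric] by simp
  also have "\<dots> = 0"
    using P D XP tr_inner_P_T_perp_tangent[OF X D] by simp
  finally have "P - P_T X = 0\<^sub>m n n"
    using tr_inner_self_eq_0[of "P - P_T X" n n] minus_carrier_mat[OF P_T_carrier[OF X]] by simp
  hence z: "(P - P_T X) $$ (i,j) = 0" if "i < n" "j < n" for i j
    using that by simp
  show "P = P_T X"
  proof (rule eq_matI)
    fix i j assume "i < dim_row (P_T X)" "j < dim_col (P_T X)"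
    hence ij: "i < n" "j < n" using P_T_carrier[OF X] by auto
    show "P $$ (i,j) = P_T X $$ (i,j)" using z[OF ij] ij Pc P_T_carrier[OF X] by simp
  qed (use Pc P_T_carrier[OF X] in auto)
qed

lemma P_T_smult: "X \<in> carrier_mat n n \<Longrightarrow> P_T (c \<cdot>\<^sub>m X) = c \<cdot>\<^sub>m P_T X"
proof -
  assume X: "X \<in> carrier_mat n n"
  have "P_T_perp (c \<cdot>\<^sub>m X) = c \<cdot>\<^sub>m P_T_perp X" unfolding P_T_perp_def
    using mult_smult_distrib[OF proj_U_compl X, of c]
      mult_smult_assoc_mat[OF _ proj_V_compl, of "(1\<^sub>m n - U * transpose_mat U) * X" n c]
      proj_U_compl X
    by simp
  thus ?thesis unfolding P_T_def using X P_T_perp_carrier[OF X]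
    by (intro eq_matI) (auto simp: algebra_simps)
qed

lemma frob_norm_P_T_le:
  assumes X: "X \<in> carrier_mat n n"
  shows "frob_norm (P_T X) \<le> frob_norm X"
proof -
  have P: "P_T X \<in> carrier_mat n n" and R: "P_T_perp X \<in> carrier_mat n n"
    using P_T_carrier P_T_perp_carrier X by auto
  have orth: "tr_inner (P_T_perp X) (P_T X) = 0"
    using tr_inner_P_T_perp_tangent[OF X P_T_in_tangent_space[OF X]] .
  have "tr_inner X X = tr_inner (P_T X + P_T_perp X) (P_T X + P_T_perp X)"
    using P_T_add_P_T_perp[OF X] by simp
  also have "\<dots> = tr_inner (P_T X) (P_T X) + tr_inner (P_T_perp X) (P_T_perp X)"
    using P R orth tr_inner_commute[OF P R]
    by (simp add: tr_inner_add_left[of _ n n] tr_inner_add_right[of _ n n])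
  finally have "tr_inner (P_T X) (P_T X) \<le> tr_inner X X"
    using tr_inner_self_nonneg[of "P_T_perp X"] by simp
  thus ?thesis unfolding frob_norm_tr_inner by (rule real_sqrt_le_mono)
qed

lemma P_T_perp_eq_self:
  assumes W: "W \<in> carrier_mat n n" and W0: "orth_proj T W = 0\<^sub>m n n"
  shows "P_T_perp W = W"
proof -
  have "P_T W = 0\<^sub>m n n" using W0 orth_proj_tangent_space[OF W] by simp
  thus ?thesis using P_T_add_P_T_perp[OF W] P_T_perp_carrier[OF W] by (metis left_add_zero_mat)
qed

lemma svd_in_tangent_space:
  assumes \<Sigma>: "\<Sigma> \<in> carrier_mat r r"
  shows "U * \<Sigma> * transpose_mat V \<in> T"
proof -
  have "U * \<Sigma> * transpose_mat V = U * transpose_mat (V * transpose_mat \<Sigma>) + 0\<^sub>m n r * transpose_mat V"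
    using transpose_mult[of V n r "transpose_mat \<Sigma>" r] assoc_mult_mat[OF U \<Sigma> VT] U V \<Sigma> VT
    by simp
  moreover have "V * transpose_mat \<Sigma> \<in> carrier_mat n (dim_col U)" "0\<^sub>m n r \<in> carrier_mat n (dim_col V)"
    using U V \<Sigma> by auto
  ultimately show ?thesis unfolding tangent_space_def by blast
qed

lemma partial_isometry_U_V: "partial_isometry (U * transpose_mat V)"
proof -
  have "partial_isometry (0\<^sub>m n n :: real mat)"
    unfolding partial_isometry_def by simp
  hence "partial_isometry (U * transpose_mat V + 0\<^sub>m n n)"
    using U V by (intro partial_isometry_add_orthogonal[OF U V UU VV]) auto
  thus ?thesis using U VT by simp
qed

lemma tr_inner_svd:
  assumes \<Sigma>: "\<Sigma> \<in> carrier_mat r r" and diag: "diagonal_mat \<Sigma>" and B: "B \<in> carrier_mat n n"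
  shows "tr_inner B (U * \<Sigma> * transpose_mat V)
    = (\<Sum>k<r. \<Sigma> $$ (k,k) * (transpose_mat U * (B * V)) $$ (k,k))"
proof -
  have US: "U * \<Sigma> \<in> carrier_mat n r" using U \<Sigma> by simp
  have BV: "B * V \<in> carrier_mat n r" using B V by simp
  have "tr_inner B (U * \<Sigma> * transpose_mat V) = tr_inner (U * \<Sigma>) (B * V)"
    using tr_inner_commute[OF B mult_carrier_mat[OF US VT]] tr_inner_mult_right[OF US VT B] by simp
  also have "\<dots> = tr_inner \<Sigma> (transpose_mat U * (B * V))"
    using tr_inner_mult_left[OF U \<Sigma> BV] .
  also have "\<dots> = (\<Sum>k<r. \<Sum>l<r. if l = k then \<Sigma> $$ (k,k) * (transpose_mat U * (B * V)) $$ (k,k) else 0)"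
    unfolding tr_inner_carrier[OF \<Sigma>] using diag \<Sigma> unfolding diagonal_mat_def
    by (intro sum.cong refl) auto
  also have "\<dots> = (\<Sum>k<r. \<Sigma> $$ (k,k) * (transpose_mat U * (B * V)) $$ (k,k))"
    by (intro sum.cong refl) (simp add: sum.delta)
  finally show ?thesis .
qed

text \<open>Upper bound: the polar factor \<open>B\<close> of \<open>U \<Sigma> V\<^sup>T\<close> satisfies \<open>u\<^sub>k \<bullet> B v\<^sub>k \<le> 1\<close>;
  lower bound: \<open>U V\<^sup>T\<close> is a partial isometry.\<close>

lemma nuclear_norm_svd:
  assumes \<Sigma>: "\<Sigma> \<in> carrier_mat r r" and diag: "diagonal_mat \<Sigma>"
    and nonneg: "\<And>i. i < r \<Longrightarrow> \<Sigma> $$ (i,i) \<ge> 0"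
  shows "nuclear_norm (U * \<Sigma> * transpose_mat V) = tr_inner (U * transpose_mat V) (U * \<Sigma> * transpose_mat V)"
proof -
  define L where "L = U * \<Sigma> * transpose_mat V"
  have UVT: "U * transpose_mat V \<in> carrier_mat n n" using U VT by simp
  have L: "L \<in> carrier_mat n n" unfolding L_def using U \<Sigma> VT by simp
  have unit_col: "col X k \<bullet> col X k = 1"
    if X: "X \<in> carrier_mat n r" and XX: "transpose_mat X * X = 1\<^sub>m r" and k: "k < r" for X k
  proof -
    have "col X k \<bullet> col X k = (transpose_mat X * X) $$ (k,k)" using X k by (simp add: row_transpose)
    thus ?thesis using XX k by simp
  qed
  have "transpose_mat U * ((U * transpose_mat V) * V) = 1\<^sub>m r"
    using assoc_mult_mat[OF U VT V] VV UU U by simp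
  hence trUV: "tr_inner (U * transpose_mat V) L = (\<Sum>k<r. \<Sigma> $$ (k,k))"
    unfolding L_def tr_inner_svd[OF \<Sigma> diag UVT] by (intro sum.cong refl) simp
  have "tr_inner (U * transpose_mat V) L \<le> 1 * nuclear_norm L"
    by (rule tr_inner_le_nuclear_norm[OF L UVT zero_le_one
          partial_isometry_spectral_le[OF UVT partial_isometry_U_V]])
  moreover have "nuclear_norm L \<le> (\<Sum>k<r. \<Sigma> $$ (k,k))"
  proof -
    obtain B where B: "B \<in> carrier_mat n n" "partial_isometry B" "tr_inner B L = nuclear_norm L"
      by (rule dual_partial_isometry_exists[OF L]) blast
    have "col U k \<bullet> (B *\<^sub>v col V k) \<le> 1" if k: "k < r" for k
    proof -
      have uk: "col U k \<in> carrier_vec n" and vk: "col V k \<in> carrier_vec n" using U V k by auto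
      have "(B *\<^sub>v col V k) \<bullet> (B *\<^sub>v col V k) \<le> 1"
        using partial_isometry_spectral_le[OF B(1,2)] vk B(1) unit_col[OF V VV k]
        unfolding spectral_le_def by auto
      hence "sqrt ((B *\<^sub>v col V k) \<bullet> (B *\<^sub>v col V k)) \<le> 1" by simp
      moreover have "col U k \<bullet> (B *\<^sub>v col V k)
          \<le> sqrt (col U k \<bullet> col U k) * sqrt ((B *\<^sub>v col V k) \<bullet> (B *\<^sub>v col V k))"
        using B(1) uk vk by (intro scalar_prod_le_sqrt[of _ n]) auto
      ultimately show ?thesis using unit_col[OF U UU k] by (metis mult_1 order_trans real_sqrt_one)
    qed
    hence "(\<Sum>k<r. \<Sigma> $$ (k,k) * (col U k \<bullet> (B *\<^sub>v col V k))) \<le> (\<Sum>k<r. \<Sigma> $$ (k,k))"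
      using nonneg by (intro sum_mono) (simp add: mult_left_le)
    moreover have "tr_inner B L = (\<Sum>k<r. \<Sigma> $$ (k,k) * (col U k \<bullet> (B *\<^sub>v col V k)))"
      unfolding L_def tr_inner_svd[OF \<Sigma> diag B(1)] using U V B(1)
      by (intro sum.cong refl) (simp add: row_transpose)
    ultimately show ?thesis using B(3) by simp
  qed
  ultimately show ?thesis using trUV unfolding L_def[symmetric] by linarith
qed

lemma tr_inner_eq_P_T_perp:
  assumes Z: "Z \<in> carrier_mat n n" and UZ: "transpose_mat U * Z = 0\<^sub>m r n"
    and ZV: "Z * V = 0\<^sub>m n r" and H: "H \<in> carrier_mat n n"
  shows "tr_inner Z H = tr_inner Z (P_T_perp H)"
  using tr_inner_add_right[OF Z P_T_carrier[OF H] P_T_perp_carrier[OF H]]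
    tr_inner_tangent_eq_0[OF Z UZ ZV P_T_in_tangent_space[OF H]] P_T_add_P_T_perp[OF H]
  by simp

text \<open>The subgradient inequality of the nuclear norm at a matrix whose polar factor is
  \<open>U V\<^sup>T\<close>: test \<open>L + H\<close> against \<open>U V\<^sup>T + B\<close>, where \<open>B\<close> is the polar factor of \<open>P_T_perp H\<close>.\<close>

lemma nuclear_norm_add_ge:
  assumes L: "L \<in> T" and nuclear_L: "nuclear_norm L = tr_inner (U * transpose_mat V) L"
    and H: "H \<in> carrier_mat n n"
  shows "nuclear_norm L + tr_inner (U * transpose_mat V) H + nuclear_norm (P_T_perp H)
    \<le> nuclear_norm (L + H)"
proof -
  let ?A = "P_T_perp H"
  have Lc: "L \<in> carrier_mat n n" using tangent_space_carrier[OF L] .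
  have A: "?A \<in> carrier_mat n n" using P_T_perp_carrier[OF H] .
  have UVT: "U * transpose_mat V \<in> carrier_mat n n" using U VT by simp
  obtain B where B: "B \<in> carrier_mat n n" "partial_isometry B" "tr_inner B ?A = nuclear_norm ?A"
    and left: "\<And>k X. X \<in> carrier_mat n k \<Longrightarrow> transpose_mat X * ?A = 0\<^sub>m k n \<Longrightarrow>
      transpose_mat X * B = 0\<^sub>m k n"
    and right: "\<And>k Y. Y \<in> carrier_mat n k \<Longrightarrow> ?A * Y = 0\<^sub>m n k \<Longrightarrow> B * Y = 0\<^sub>m n k"
    by (rule dual_partial_isometry_exists[OF A]) blast
  have UB: "transpose_mat U * B = 0\<^sub>m r n" by (rule left[OF U U_transpose_P_T_perp[OF H]])
  have BV: "B * V = 0\<^sub>m n r" by (rule right[OF V P_T_perp_V[OF H]])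
  have "spectral_le (U * transpose_mat V + B) 1"
    using partial_isometry_add_orthogonal[OF U V UU VV B(1,2) UB BV] UVT B(1)
    by (intro partial_isometry_spectral_le[of _ n n]) auto
  hence "tr_inner (U * transpose_mat V + B) (L + H) \<le> 1 * nuclear_norm (L + H)"
    using UVT B(1) Lc H by (intro tr_inner_le_nuclear_norm[of _ n]) auto
  moreover have "tr_inner B L = 0" by (rule tr_inner_tangent_eq_0[OF B(1) UB BV L])
  moreover have "tr_inner B H = nuclear_norm ?A"
    using tr_inner_eq_P_T_perp[OF B(1) UB BV H] B(3) by simp
  ultimately show ?thesis
    using nuclear_L tr_inner_add_left[OF UVT B(1)] tr_inner_add_right[OF UVT Lc H]
      tr_inner_add_right[OF B(1) Lc H]
    by simp
qed

lemma tr_inner_perp_le: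
  assumes W: "W \<in> carrier_mat n n" and W0: "orth_proj T W = 0\<^sub>m n n"
    and Wn: "spectral_norm W \<le> c" and H: "H \<in> carrier_mat n n"
  shows "tr_inner W H \<le> c * nuclear_norm (P_T_perp H)"
proof -
  have "transpose_mat U * W = 0\<^sub>m r n" "W * V = 0\<^sub>m n r"
    using U_transpose_P_T_perp[OF W] P_T_perp_V[OF W] P_T_perp_eq_self[OF W W0] by simp_all
  hence "tr_inner W H = tr_inner W (P_T_perp H)"
    by (rule tr_inner_eq_P_T_perp[OF W _ _ H])
  also have "\<dots> \<le> c * nuclear_norm (P_T_perp H)"
    using spectral_le_mono[OF spectral_le_spectral_norm[OF W] spectral_norm_nonneg Wn]
      spectral_norm_nonneg[of W] Wn W P_T_perp_carrier[OF H]
    by (intro tr_inner_le_nuclear_norm[of _ n]) auto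
  finally show ?thesis .
qed

text \<open>Splitting \<open>P_Omega \<Omega> H\<close> along \<open>T\<close> and \<open>T\<^sup>\<perp>\<close>, and \<open>H\<close> along \<open>\<Omega>\<close> and its complement.\<close>

lemma frob_norm_P_Omega_bound:
  assumes PP: "op_norm n (\<lambda>X. P_Omega \<Omega> (orth_proj T X)) \<le> \<rho>" and \<rho>: "0 \<le> \<rho>"
    and H: "H \<in> carrier_mat n n"
  shows "(1 - \<rho>) * frob_norm (P_Omega \<Omega> H)
    \<le> \<rho> * l1_norm (P_Omega (- \<Omega>) H) + nuclear_norm (P_T_perp H)"
proof -
  let ?f = "\<lambda>X. P_Omega \<Omega> (orth_proj T X)"
  have "frob_norm (?f H) \<le> op_norm n ?f * frob_norm H"
  proof (rule frob_norm_le_op_norm[OF _ _ H])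
    fix X :: "real mat" and c :: real assume X: "X \<in> carrier_mat n n"
    show "?f (c \<cdot>\<^sub>m X) = c \<cdot>\<^sub>m ?f X"
      using orth_proj_tangent_space X P_T_smult[OF X] P_Omega_smult by simp
    show "frob_norm (?f X) \<le> frob_norm X"
      unfolding orth_proj_tangent_space[OF X]
      using frob_norm_P_Omega_le frob_norm_P_T_le[OF X] by (rule order.trans)
  qed
  also have "\<dots> \<le> \<rho> * frob_norm H" by (rule mult_right_mono[OF PP frob_norm_nonneg])
  finally have PT: "frob_norm (P_Omega \<Omega> (P_T H)) \<le> \<rho> * frob_norm H"
    unfolding orth_proj_tangent_space[OF H] .
  have "frob_norm (P_Omega \<Omega> H)
      \<le> frob_norm (P_Omega \<Omega> (P_T H)) + frob_norm (P_Omega \<Omega> (P_T_perp H))"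
    using P_Omega_add[OF P_T_carrier[OF H] P_T_perp_carrier[OF H]] P_T_add_P_T_perp[OF H]
      frob_norm_add_le[OF P_Omega_carrier P_Omega_carrier, OF P_T_carrier[OF H] P_T_perp_carrier[OF H]]
    by simp
  also have "frob_norm (P_Omega \<Omega> (P_T_perp H)) \<le> nuclear_norm (P_T_perp H)"
    using frob_norm_P_Omega_le frob_norm_le_nuclear_norm[OF P_T_perp_carrier[OF H]]
    by (rule order.trans)
  finally have split: "frob_norm (P_Omega \<Omega> H) \<le> \<rho> * frob_norm H + nuclear_norm (P_T_perp H)"
    using PT by simp
  have "frob_norm H \<le> frob_norm (P_Omega \<Omega> H) + l1_norm (P_Omega (- \<Omega>) H)"
    using frob_norm_add_le[OF P_Omega_carrier P_Omega_carrier, OF H H, of \<Omega> "- \<Omega>"]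
      P_Omega_add_P_Omega_compl[of \<Omega> H] frob_norm_le_l1_norm[of "P_Omega (- \<Omega>) H"]
    by simp
  hence "\<rho> * frob_norm H \<le> \<rho> * frob_norm (P_Omega \<Omega> H) + \<rho> * l1_norm (P_Omega (- \<Omega>) H)"
    using mult_left_mono[OF _ \<rho>] by (simp flip: distrib_left)
  thus ?thesis using split by (simp add: left_diff_distrib)
qed

end

section \<open>Exact recovery from a dual certificate\<close>

lemma is_opt_unique_if_gain:
  fixes g :: "real mat \<Rightarrow> real"
  assumes L0: "L0 \<in> carrier_mat n n" and S0: "S0 \<in> carrier_mat n n"
    and gain: "\<And>H. H \<in> carrier_mat n n \<Longrightarrow>
      nuclear_norm L0 + lam * l1_norm S0 + g H \<le> nuclear_norm (L0 + H) + lam * l1_norm (S0 - H)"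
    and gain_nonneg: "\<And>H. H \<in> carrier_mat n n \<Longrightarrow> g H \<ge> 0"
    and gain_eq_0: "\<And>H. H \<in> carrier_mat n n \<Longrightarrow> g H = 0 \<Longrightarrow> H = 0\<^sub>m n n"
  shows "is_opt n lam (L0 + S0) L S \<longleftrightarrow> L = L0 \<and> S = S0"
proof -
  have perturb: "L0 + (L - L0) = L" "S0 - (L - L0) = S"
    if "L \<in> carrier_mat n n" "S \<in> carrier_mat n n" "L + S = L0 + S0" for L S
  proof -
    have "L $$ (i,j) + S $$ (i,j) = L0 $$ (i,j) + S0 $$ (i,j)" if "i < n" "j < n" for i j
      using arg_cong[OF \<open>L + S = L0 + S0\<close>, of "\<lambda>M. M $$ (i,j)"] that \<open>L \<in> _\<close> \<open>S \<in> _\<close> L0 S0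
      by simp
    thus "L0 + (L - L0) = L" "S0 - (L - L0) = S"
      using that L0 S0 by (auto intro!: eq_matI simp: algebra_simps)
  qed
  have opt0: "is_opt n lam (L0 + S0) L0 S0"
    unfolding is_opt_def
  proof (intro conjI allI impI)
    fix L S assume "L \<in> carrier_mat n n \<and> S \<in> carrier_mat n n \<and> L + S = L0 + S0"
    hence LS: "L \<in> carrier_mat n n" "S \<in> carrier_mat n n" "L + S = L0 + S0" by auto
    hence H: "L - L0 \<in> carrier_mat n n" using L0 by auto
    have "nuclear_norm L0 + lam * l1_norm S0 \<le> nuclear_norm L0 + lam * l1_norm S0 + g (L - L0)"
      using gain_nonneg[OF H] by simp
    also have "\<dots> \<le> nuclear_norm L + lam * l1_norm S"
      using gain[OF H] perturb[OF LS] by simp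
    finally show "nuclear_norm L0 + lam * l1_norm S0 \<le> nuclear_norm L + lam * l1_norm S" .
  qed (use L0 S0 in auto)
  show ?thesis
  proof
    assume opt: "is_opt n lam (L0 + S0) L S"
    hence LS: "L \<in> carrier_mat n n" "S \<in> carrier_mat n n" "L + S = L0 + S0"
      and le: "nuclear_norm L + lam * l1_norm S \<le> nuclear_norm L0 + lam * l1_norm S0"
      unfolding is_opt_def using L0 S0 by auto
    have H: "L - L0 \<in> carrier_mat n n" using LS(1) L0 by auto
    hence "g (L - L0) = 0"
      using gain[OF H] gain_nonneg[OF H] perturb[OF LS] le by simp
    hence "L - L0 = 0\<^sub>m n n" by (rule gain_eq_0[OF H])
    thus "L = L0 \<and> S = S0" using perturb[OF LS] L0 S0 by auto
  qed (use opt0 in auto)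
qed

locale rpca_certificate = orthonormal_frames +
  fixes L0 S0 \<Sigma> W F D :: "real mat" and lam :: real
  assumes S0: "S0 \<in> carrier_mat n n"
    and \<Sigma>: "\<Sigma> \<in> carrier_mat r r" and \<Sigma>diag: "diagonal_mat \<Sigma>" and \<Sigma>pos: "\<forall>i<r. \<Sigma> $$ (i,i) > 0"
    and svd: "L0 = U * \<Sigma> * transpose_mat V"
    and lam: "0 < lam" "lam < 1"
    and PP: "op_norm n (\<lambda>X. P_Omega (support S0) (orth_proj (tangent_space n U V) X)) \<le> 1/2"
    and WFD: "W \<in> carrier_mat n n" "F \<in> carrier_mat n n" "D \<in> carrier_mat n n"
    and cert: "U * transpose_mat V + W = lam \<cdot>\<^sub>m (sgn_mat S0 + F + P_Omega (support S0) D)"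
    and W0: "orth_proj (tangent_space n U V) W = 0\<^sub>m n n"
    and Wn: "spectral_norm W \<le> 1/2"
    and F0: "P_Omega (support S0) F = 0\<^sub>m n n"
    and Fn: "max_norm F \<le> 1/2"
    and Dn: "frob_norm (P_Omega (support S0) D) \<le> 1/4"
begin

abbreviation \<Omega> :: "(nat \<times> nat) set" where
  "\<Omega> \<equiv> support S0"

definition gain :: "real mat \<Rightarrow> real" where
  "gain H = (1 - lam) / 2 * nuclear_norm (P_T_perp H) + lam / 4 * l1_norm (P_Omega (- \<Omega>) H)"

lemma L0_tangent: "L0 \<in> T"
  unfolding svd by (rule svd_in_tangent_space[OF \<Sigma>])

lemma nuclear_norm_L0: "nuclear_norm L0 = tr_inner (U * transpose_mat V) L0"
  unfolding svd using \<Sigma>pos by (intro nuclear_norm_svd[OF \<Sigma> \<Sigma>diag]) (simp add: less_imp_le)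

lemma tr_inner_certificate:
  assumes H: "H \<in> carrier_mat n n"
  shows "tr_inner (U * transpose_mat V) H
    = lam * tr_inner (sgn_mat S0) H + lam * tr_inner F H + lam * tr_inner (P_Omega \<Omega> D) H
      - tr_inner W H"
proof -
  have UVT: "U * transpose_mat V \<in> carrier_mat n n" using U VT by simp
  have sgn: "sgn_mat S0 \<in> carrier_mat n n" using S0 unfolding sgn_mat_def by simp
  have sgnF: "sgn_mat S0 + F \<in> carrier_mat n n" using WFD(2) by simp
  have "tr_inner (U * transpose_mat V) H + tr_inner W H
      = lam * (tr_inner (sgn_mat S0) H + tr_inner F H + tr_inner (P_Omega \<Omega> D) H)"
    using tr_inner_add_left[OF UVT WFD(1), of H] cert tr_inner_smult_left
      tr_inner_add_left[OF sgnF P_Omega_carrier[OF WFD(3), of \<Omega>], of H]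
      tr_inner_add_left[OF sgn WFD(2), of H]
    by simp
  thus ?thesis by (simp add: algebra_simps)
qed

lemma objective_gain:
  assumes H: "H \<in> carrier_mat n n"
  shows "nuclear_norm L0 + lam * l1_norm S0 + gain H
    \<le> nuclear_norm (L0 + H) + lam * l1_norm (S0 - H)"
proof -
  define a where "a = nuclear_norm (P_T_perp H)"
  define b where "b = l1_norm (P_Omega (- \<Omega>) H)"
  define c where "c = frob_norm (P_Omega \<Omega> H)"
  have nuclear: "nuclear_norm L0 + tr_inner (U * transpose_mat V) H + a \<le> nuclear_norm (L0 + H)"
    unfolding a_def by (rule nuclear_norm_add_ge[OF L0_tangent nuclear_norm_L0 H])
  have l1: "l1_norm S0 - tr_inner (sgn_mat S0) H + b \<le> l1_norm (S0 - H)"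
    unfolding b_def by (rule l1_norm_diff_ge[OF S0 H])
  have W: "tr_inner W H \<le> 1/2 * a"
    unfolding a_def by (rule tr_inner_perp_le[OF WFD(1) W0 Wn H])
  have F: "- (1/2) * b \<le> tr_inner F H"
    unfolding b_def by (rule tr_inner_vanishing_on_ge[OF H WFD(2) F0 Fn])
  have D: "- (1/4) * c \<le> tr_inner (P_Omega \<Omega> D) H"
    unfolding c_def by (rule tr_inner_P_Omega_ge[OF WFD(3) H Dn])
  have "(1 - 1/2) * c \<le> 1/2 * b + a"
    unfolding a_def b_def c_def by (rule frob_norm_P_Omega_bound[OF PP _ H]) simp
  hence "c \<le> b + a + a" by (simp add: field_simps)
  hence "lam * c \<le> lam * (b + a + a)" by (rule mult_left_mono) (use lam in simp)
  hence "lam * c \<le> lam * b + lam * a + lam * a" by (simp only: distrib_left)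
  moreover have "- (lam * b) / 2 \<le> lam * tr_inner F H"
    using mult_left_mono[OF F, of lam] lam by simp
  moreover have "- (lam * c) / 4 \<le> lam * tr_inner (P_Omega \<Omega> D) H"
    using mult_left_mono[OF D, of lam] lam by simp
  moreover have "lam * l1_norm S0 - lam * tr_inner (sgn_mat S0) H + lam * b \<le> lam * l1_norm (S0 - H)"
    using mult_left_mono[OF l1, of lam] lam by (simp add: distrib_left right_diff_distrib)
  moreover have "gain H = a / 2 - lam * a / 2 + lam * b / 4"
    unfolding gain_def a_def b_def by (simp add: field_simps)
  ultimately show ?thesis
    using nuclear W tr_inner_certificate[OF H] by linarith
qed

lemma gain_nonneg: "H \<in> carrier_mat n n \<Longrightarrow> gain H \<ge> 0"
  unfolding gain_def using lam nuclear_norm_nonneg[OF P_T_perp_carrier] l1_norm_nonneg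
  by (simp add: add_nonneg_nonneg)

lemma gain_eq_0:
  assumes H: "H \<in> carrier_mat n n" and g0: "gain H = 0"
  shows "H = 0\<^sub>m n n"
proof -
  define a where "a = nuclear_norm (P_T_perp H)"
  define b where "b = l1_norm (P_Omega (- \<Omega>) H)"
  have "a \<ge> 0" unfolding a_def by (rule nuclear_norm_nonneg[OF P_T_perp_carrier[OF H]])
  moreover have "b \<ge> 0" unfolding b_def by (rule l1_norm_nonneg)
  ultimately have "(1 - lam) / 2 * a = 0" "lam / 4 * b = 0"
    using g0 lam add_nonneg_eq_0_iff[of "(1 - lam) / 2 * a" "lam / 4 * b"]
    unfolding gain_def a_def[symmetric] b_def[symmetric] by auto
  hence a: "a = 0" and b: "b = 0" using lam by auto
  have "(1 - 1/2) * frob_norm (P_Omega \<Omega> H) \<le> 1/2 * b + a"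
    unfolding a_def b_def by (rule frob_norm_P_Omega_bound[OF PP _ H]) simp
  hence "frob_norm (P_Omega \<Omega> H) = 0"
    using a b frob_norm_nonneg[of "P_Omega \<Omega> H"] by simp
  hence "P_Omega \<Omega> H = 0\<^sub>m n n"
    using frob_norm_eq_0_iff[OF P_Omega_carrier[OF H]] by blast
  moreover have "P_Omega (- \<Omega>) H = 0\<^sub>m n n"
    using l1_norm_eq_0[OF P_Omega_carrier[OF H]] b unfolding b_def by blast
  ultimately show ?thesis using P_Omega_add_P_Omega_compl[of \<Omega> H] H by simp
qed

end

theorem lemma2p4:
  fixes n r :: nat and L0 S0 U V \<Sigma> W F D :: "real mat" and lam :: real
  assumes L0: "L0 \<in> carrier_mat n n" and S0: "S0 \<in> carrier_mat n n"
    and U: "U \<in> carrier_mat n r" and V: "V \<in> carrier_mat n r"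
    and \<Sigma>: "\<Sigma> \<in> carrier_mat r r"
    and UU: "transpose_mat U * U = 1\<^sub>m r" and VV: "transpose_mat V * V = 1\<^sub>m r"
    and \<Sigma>diag: "diagonal_mat \<Sigma>" and \<Sigma>pos: "\<forall>i<r. \<Sigma> $$ (i,i) > 0"
    and svd: "L0 = U * \<Sigma> * transpose_mat V"
    and lam: "0 < lam" "lam < 1"
    and PP: "op_norm n (\<lambda>X. P_Omega (support S0) (orth_proj (tangent_space n U V) X)) \<le> 1/2"
    and WFD: "W \<in> carrier_mat n n" "F \<in> carrier_mat n n" "D \<in> carrier_mat n n"
    and cert: "U * transpose_mat V + W =
        lam \<cdot>\<^sub>m (sgn_mat S0 + F + P_Omega (support S0) D)"
    and W0: "orth_proj (tangent_space n U V) W = 0\<^sub>m n n"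
    and Wn: "spectral_norm W \<le> 1/2"
    and F0: "P_Omega (support S0) F = 0\<^sub>m n n"
    and Fn: "max_norm F \<le> 1/2"
    and Dn: "frob_norm (P_Omega (support S0) D) \<le> 1/4"
  shows "\<forall>L S. is_opt n lam (L0 + S0) L S \<longleftrightarrow> (L = L0 \<and> S = S0)"
proof -
  interpret rpca_certificate n r U V L0 S0 \<Sigma> W F D lam
    using assms by unfold_locales auto
  show ?thesis
    using is_opt_unique_if_gain[OF L0 S0 objective_gain gain_nonneg gain_eq_0] by blast
qed

end
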